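(* Let $\mathbf D_0\in\mathbb R^{m\times p}$ have unit-norm columns and let $J$ be a random support with $|J|=k$, $\Pr(j\in J)=k/p$ and $\Pr(i,j\in J)=\frac{k(k-1)}{p(p-1)}$ for $i\ne j$. If $k\mu(t)<1/2$, then for any $\mathbf W\in\mathcal W_{\mathbf D_0}$ and $\mathbf v\in\mathcal S^p$, $$\mathbb E_J\big\{\mathrm{Tr}\big([\mathbf D_0]_J^\top(\mathbf I-\mathbf P_J(t))[\mathbf D_0]_J\big)\big\}\ge(1-\mathcal K^2)\frac kpt^2,$$ $$\Big|\mathbb E_J\big\{\mathrm{Tr}\big([\boldsymbol\Theta_J(0)[\mathbf D_0]_J^\top-\boldsymbol\Theta_J(t)[\mathbf D(t)]_J^\top][\mathbf D_0]_J\big)\big\}\Big|\le3Q_t^2\,t\,\frac kp\,|||\mathbf D_0|||_2\,k\mu(t),$$ $$\big|\mathbb E_J\{\mathrm{Tr}(\boldsymbol\Theta_J(0)-\boldsymbol\Theta_J(t))\}\big|\le8Q_t^4\,t\,\frac kp\,|||\mathbf D_0|||_2\,k\mu(t),$$ with $\mathcal K\triangleq C_t(|||\mathbf D_0|||_2\sqrt{k/p}+t)$.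
   Context: $\mu_0=\max_{i\ne j}|[\mathbf d_0^i]^\top\mathbf d_0^j|$, $\mu(t)=\mu_0+3t$, $Q_t=1/\sqrt{1-k\mu(t)}$; $\delta_k(\mathbf D_0)$: smallest $\delta$ with $(1-\delta)\|\mathbf z\|^2\le\|[\mathbf D_0]_J\mathbf z\|^2\le(1+\delta)\|\mathbf z\|^2$ for all $|J|=k$; $C_t=1/(\sqrt{1-\delta_k(\mathbf D_0)}-t)$. $\mathcal S^p$ unit sphere; $\mathcal W_{\mathbf D_0}=\{\mathbf W:\mathrm{diag}(\mathbf W^\top\mathbf D_0)=\mathbf 0,\mathrm{diag}(\mathbf W^\top\mathbf W)=\mathbf 1\}$; $\mathbf D(t)=\mathbf D_0\mathrm{Diag}[\cos(\mathbf vt)]+\mathbf W\mathrm{Diag}[\sin(\mathbf vt)]$. $\mathbf M_J$: columns of $\mathbf M$ indexed by $J$; $\boldsymbol\Theta_J(t)=([\mathbf D(t)]_J^\top[\mathbf D(t)]_J)^{-1}$; $\mathbf P_J(t)$ orthogonal projector onto the span of $[\mathbf D(t)]_J$; $|||\cdot|||_2$ spectral norm; $\mathbb E_J$ expectation over $J$ only. *)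

theory Defs
  imports "HOL-Analysis.Analysis" "HOL-Probability.Probability"
begin

text \<open>Matrices: an m x p real matrix is a value of type real^'p^'m; its columns are
  indexed by the finite type 'p (so p = CARD('p)), rows by 'm.  A support J is a set of
  column indices; a J-indexed square matrix (such as a Gram matrix restricted to J, or
  its inverse) is represented as a function 'p => 'p => real whose relevant entries are
  those with both indices in J.  The trace of such a matrix is the sum of its diagonal
  entries over J.  Column order inside [M]_J is irrelevant for all quantities below.\<close>

definition orth_proj :: "'a::euclidean_space set \<Rightarrow> 'a \<Rightarrow> 'a" where
  "orth_proj S x = (THE y. y \<in> S \<and> (\<forall>z\<in>S. inner (x - y) z = 0))"

definition gram :: "real^'p^'m \<Rightarrow> 'p \<Rightarrow> 'p \<Rightarrow> real" where
  "gram D i j = inner (column i D) (column j D)"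

definition inv_on :: "'p set \<Rightarrow> ('p \<Rightarrow> 'p \<Rightarrow> real) \<Rightarrow> 'p \<Rightarrow> 'p \<Rightarrow> real" where
  "inv_on J A = (THE B. (\<forall>i\<in>J. \<forall>j\<in>J. (\<Sum>l\<in>J. A i l * B l j) = (if i = j then 1 else 0))
                      \<and> (\<forall>i j. i \<notin> J \<or> j \<notin> J \<longrightarrow> B i j = 0))"

definition Theta :: "real^'p^'m \<Rightarrow> 'p set \<Rightarrow> 'p \<Rightarrow> 'p \<Rightarrow> real" where
  "Theta D J = inv_on J (gram D)"

definition projJ :: "real^'p^'m \<Rightarrow> 'p set \<Rightarrow> real^'m \<Rightarrow> real^'m" where
  "projJ D J = orth_proj (span ((\<lambda>j. column j D) ` J))"

definition Dt :: "real^'p^'m \<Rightarrow> real^'p^'m \<Rightarrow> real^'p \<Rightarrow> real \<Rightarrow> real^'p^'m" where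
  "Dt D0 W v t = (\<chi> i j. D0$i$j * cos (v$j * t) + W$i$j * sin (v$j * t))"

text \<open>Mutual coherence mu_0 = max_{i~=j} |d_i^T d_j| (taken to be 0 if there is only one column).\<close>
definition mu0 :: "real^'p^'m \<Rightarrow> real" where
  "mu0 D = Max (insert 0 {\<bar>inner (column i D) (column j D)\<bar> | i j. i \<noteq> j})"

definition mu :: "real^'p^'m \<Rightarrow> real \<Rightarrow> real" where
  "mu D t = mu0 D + 3 * t"

definition Qt :: "real^'p^'m \<Rightarrow> nat \<Rightarrow> real \<Rightarrow> real" where
  "Qt D k t = 1 / sqrt (1 - real k * mu D t)"

definition rip :: "real^'p^'m \<Rightarrow> nat \<Rightarrow> real" where
  "rip D k = Inf {\<delta>. \<forall>J (z::'p \<Rightarrow> real). card J = k \<longrightarrow>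
      (1 - \<delta>) * (\<Sum>j\<in>J. (z j)\<^sup>2) \<le> (norm (\<Sum>j\<in>J. z j *\<^sub>R column j D))\<^sup>2 \<and>
      (norm (\<Sum>j\<in>J. z j *\<^sub>R column j D))\<^sup>2 \<le> (1 + \<delta>) * (\<Sum>j\<in>J. (z j)\<^sup>2)}"

definition Ct :: "real^'p^'m \<Rightarrow> nat \<Rightarrow> real \<Rightarrow> real" where
  "Ct D k t = 1 / (sqrt (1 - rip D k) - t)"

definition specnorm :: "real^'p^'m \<Rightarrow> real" where
  "specnorm D = onorm (\<lambda>x. D *v x)"

end

theory Submission
  imports Defs
begin

text \<open>
  Write the columns of \<open>D(t)\<close> as \<open>d\<^sub>j(t) = d\<^sub>j + e\<^sub>j\<close>. Then \<open>|e\<^sub>j|\<^sup>2 = 2 - 2 cos (v\<^sub>j t)\<close>, so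
  \<open>t\<^sup>2 - t\<^sup>4/12 \<le> \<Sum>\<^sub>j |e\<^sub>j|\<^sup>2 \<le> t\<^sup>2\<close>, and \<open>\<langle>d\<^sub>j(t), e\<^sub>j\<rangle> = |e\<^sub>j|\<^sup>2 / 2\<close>. Each quantity is the expectation
  of a sum over single indices or over pairs of distinct indices of \<open>J\<close>; the marginals of \<open>J\<close> turn
  the former into \<open>k/p\<close> times a sum over all indices and bound the latter by \<open>(k/p)\<^sup>2\<close> times a sum
  over all pairs. The Gram matrices of \<open>[D\<^sub>0]\<^sub>J\<close> and \<open>[D(t)]\<^sub>J\<close> have unit diagonal and off-diagonal
  entries at most \<open>\<mu>(t)\<close>, so by diagonal dominance their inverses have diagonal entries at most
  \<open>Q\<^sub>t\<^sup>2\<close> and off-diagonal entries at most \<open>\<mu>(t) Q\<^sub>t\<^sup>2\<close>.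

  (1) The residual \<open>\<langle>d\<^sub>j, (I - P\<^sub>J) d\<^sub>j\<rangle>\<close> equals \<open>|e\<^sub>j|\<^sup>2 - |P\<^sub>J e\<^sub>j|\<^sup>2\<close>, and the restricted isometry
  property of \<open>D\<^sub>0\<close>, perturbed by at most \<open>t\<close>, gives \<open>|P\<^sub>J u|\<^sup>2 \<le> C\<^sub>t\<^sup>2 \<Sum>\<^bsub>l\<in>J\<^esub> \<langle>d\<^sub>l(t), u\<rangle>\<^sup>2\<close>.
  (2) Both traces \<open>Tr(\<Theta>\<^sub>J G\<^sub>J)\<close> equal \<open>k\<close>, so the difference is \<open>\<Sum>\<^bsub>i,l\<^esub> \<Theta>\<^sub>J(t)\<^bsub>il\<^esub> \<langle>d\<^sub>l(t), e\<^sub>i\<rangle>\<close>.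
  (3) \<open>\<Theta>\<^sub>J(0) - \<Theta>\<^sub>J(t) = \<Theta>\<^sub>J(0) (G\<^sub>J(t) - G\<^sub>J(0)) \<Theta>\<^sub>J(t)\<close>, and \<open>G\<^sub>J(t) - G\<^sub>J(0)\<close> vanishes on
  the diagonal, so only pairs of distinct indices contribute.
\<close>

section \<open>Elementary estimates\<close>

lemma cos_ge_one_minus_half_square: "1 - x\<^sup>2 / 2 \<le> cos (x::real)"
proof -
  obtain s where "cos x = (\<Sum>m<2. cos_coeff m * x ^ m) + (cos (s + 1/2 * real 2 * pi) / fact 2) * x ^ 2"
    using Maclaurin_cos_expansion by blast
  moreover have "(\<Sum>m<2. cos_coeff m * x ^ m) = 1"
    by (simp add: eval_nat_numeral cos_coeff_def)
  moreover have "-1 * x\<^sup>2 \<le> cos (s + 1/2 * real 2 * pi) * x\<^sup>2"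
    by (rule mult_right_mono) simp_all
  ultimately show ?thesis by (simp add: fact_numeral)
qed

lemma cos_le_quartic_taylor: "cos (x::real) \<le> 1 - x\<^sup>2 / 2 + x ^ 4 / 24"
proof -
  obtain s where "cos x = (\<Sum>m<4. cos_coeff m * x ^ m) + (cos (s + 1/2 * real 4 * pi) / fact 4) * x ^ 4"
    using Maclaurin_cos_expansion by blast
  moreover have "(\<Sum>m<4. cos_coeff m * x ^ m) = 1 - x\<^sup>2 / 2"
    by (simp add: eval_nat_numeral cos_coeff_def, presburger)
  moreover have "cos (s + 1/2 * real 4 * pi) * x ^ 4 \<le> 1 * x ^ 4"
    by (rule mult_right_mono) simp_all
  ultimately show ?thesis by (simp add: fact_numeral)
qed

lemma sum_abs_le_sqrt_card_mult_sqrt_sum_squares: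
  fixes f :: "'a \<Rightarrow> real"
  shows "(\<Sum>l\<in>A. \<bar>f l\<bar>) \<le> sqrt (real (card A)) * sqrt (\<Sum>l\<in>A. (f l)\<^sup>2)"
proof -
  have "(\<Sum>l\<in>A. \<bar>f l\<bar> * 1)\<^sup>2 \<le> (\<Sum>l\<in>A. \<bar>f l\<bar>\<^sup>2) * (\<Sum>l\<in>A. 1\<^sup>2)"
    by (rule Cauchy_Schwarz_ineq_sum)
  hence "(\<Sum>l\<in>A. \<bar>f l\<bar>)\<^sup>2 \<le> real (card A) * (\<Sum>l\<in>A. (f l)\<^sup>2)"
    by (simp add: mult.commute)
  hence "sqrt ((\<Sum>l\<in>A. \<bar>f l\<bar>)\<^sup>2) \<le> sqrt (real (card A) * (\<Sum>l\<in>A. (f l)\<^sup>2))"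
    by (rule real_sqrt_le_mono)
  moreover have "0 \<le> (\<Sum>l\<in>A. \<bar>f l\<bar>)" by (simp add: sum_nonneg)
  ultimately show ?thesis by (simp add: real_sqrt_mult)
qed

lemma excess_lower_bound:
  fixes y a t :: real
  assumes y0: "0 \<le> y" and y1: "y \<le> 1" and a1: "1 \<le> a" and t0: "0 \<le> t" and yt: "y + t < 1"
  shows "t\<^sup>2 / 12 \<le> 2 * a * y * t * (1 - y) + 3/4 * t\<^sup>2 * (1 - y\<^sup>2)"
proof (cases "1/24 \<le> y")
  case True
  have "t * t \<le> t * (1 - y)" using yt t0 by (intro mult_left_mono) auto
  hence "1/24 * (t * t) \<le> y * (t * (1 - y))" using True t0 y0 yt by (intro mult_mono) auto
  moreover have "1 * (y * (t * (1 - y))) \<le> a * (y * (t * (1 - y)))"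
    using a1 y0 t0 y1 by (intro mult_right_mono) auto
  moreover have "0 \<le> 3/4 * t\<^sup>2 * (1 - y\<^sup>2)" using y0 y1 by (simp add: power_le_one)
  moreover have "2 * a * y * t * (1 - y) = 2 * (a * (y * (t * (1 - y))))" and "t\<^sup>2 / 12 = 2 * (1/24 * (t * t))"
    by (simp_all add: power2_eq_square)
  ultimately show ?thesis by linarith
next
  case False
  hence "y\<^sup>2 \<le> (1/24)\<^sup>2" using y0 by (intro power_mono) auto
  hence "t\<^sup>2 * (1/12) \<le> t\<^sup>2 * (3/4 * (1 - y\<^sup>2))" by (intro mult_left_mono) (auto simp: power2_eq_square)
  moreover have "0 \<le> 2 * a * y * t * (1 - y)" using a1 y0 t0 y1 by simp
  moreover have "3/4 * t\<^sup>2 * (1 - y\<^sup>2) = t\<^sup>2 * (3/4 * (1 - y\<^sup>2))" by simp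
  ultimately show ?thesis by linarith
qed

text \<open>With \<open>K = C (a \<surd>x + t)\<close> and \<open>L = C\<^sup>2 ((1 - x) t\<^sup>2 / 4 + x (a + t)\<^sup>2)\<close>: once \<open>K < 1\<close>
  forces \<open>\<surd>x + t < 1\<close>, the gap \<open>K\<^sup>2 - L\<close> is at least \<open>t\<^sup>2 / 12\<close>, which pays for the
  fourth-order term in \<open>E2 \<ge> t\<^sup>2 - t\<^sup>4 / 12\<close>.\<close>
lemma residual_lower_bound_arith:
  fixes x a C t E2 E :: real
  assumes x0: "0 \<le> x" and x1: "x \<le> 1" and a1: "1 \<le> a" and C1: "1 \<le> C" and t0: "0 \<le> t"
    and E2u: "E2 \<le> t\<^sup>2" and E2l: "t\<^sup>2 - t ^ 4 / 12 \<le> E2"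
    and EL: "x * E2 * (1 - C\<^sup>2 * ((1 - x) * t\<^sup>2 / 4 + x * (a + t)\<^sup>2)) \<le> E" and E0: "0 \<le> E"
  shows "(1 - (C * (a * sqrt x + t))\<^sup>2) * x * t\<^sup>2 \<le> E"
proof (cases "1 \<le> C * (a * sqrt x + t)")
  case True
  hence "1 \<le> (C * (a * sqrt x + t))\<^sup>2" by (simp add: one_le_power)
  hence "(1 - (C * (a * sqrt x + t))\<^sup>2) * x * t\<^sup>2 \<le> 0" using x0 by (simp add: mult_nonpos_nonneg)
  thus ?thesis using E0 by linarith
next
  case False
  define y where "y = sqrt x"
  define L where "L = C\<^sup>2 * ((1 - x) * t\<^sup>2 / 4 + x * (a + t)\<^sup>2)"
  define K where "K = C * (a * y + t)"
  have y0: "0 \<le> y" and y1: "y \<le> 1" and yx: "y\<^sup>2 = x" using x0 x1 by (simp_all add: y_def)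
  have L0: "0 \<le> L" unfolding L_def using x0 x1 t0 by simp
  have "y + t \<le> C * (a * y + t)"
    using mult_right_mono[OF a1 y0] mult_right_mono[OF C1, of "a * y + t"] y0 t0 a1 by simp
  hence yt: "y + t < 1" using False by (simp add: y_def)
  have "K\<^sup>2 - L = C\<^sup>2 * (2 * a * y * t * (1 - y) + 3/4 * t\<^sup>2 * (1 - y\<^sup>2))"
    unfolding K_def L_def yx[symmetric] by (simp add: power2_eq_square algebra_simps, simp add: field_simps)
  also have "\<dots> \<ge> 1 * (t\<^sup>2 / 12)"
    using excess_lower_bound[OF y0 y1 a1 t0 yt] C1 by (intro mult_mono) (auto simp: one_le_power)
  finally have KL: "t\<^sup>2 / 12 \<le> K\<^sup>2 - L" by simp
  have "E2 - t\<^sup>2 \<le> (E2 - t\<^sup>2) * (1 - L)"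
  proof (cases "L \<le> 1")
    case True
    have "(E2 - t\<^sup>2) * 1 \<le> (E2 - t\<^sup>2) * (1 - L)" using E2u L0 by (intro mult_left_mono_neg) auto
    thus ?thesis by simp
  next
    case False
    hence "0 \<le> (E2 - t\<^sup>2) * (1 - L)" using E2u by (intro mult_nonpos_nonpos) auto
    thus ?thesis using E2u by linarith
  qed
  moreover have "t\<^sup>2 * (t\<^sup>2 / 12) \<le> t\<^sup>2 * (K\<^sup>2 - L)" using KL by (intro mult_left_mono) auto
  moreover have "E2 * (1 - L) - t\<^sup>2 * (1 - K\<^sup>2) = (E2 - t\<^sup>2) * (1 - L) + t\<^sup>2 * (K\<^sup>2 - L)"
    by (simp add: algebra_simps)
  ultimately have "t\<^sup>2 * (1 - K\<^sup>2) \<le> E2 * (1 - L)"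
    using E2l by (simp add: power4_eq_xxxx power2_eq_square)
  hence "x * (t\<^sup>2 * (1 - K\<^sup>2)) \<le> x * (E2 * (1 - L))" using x0 by (rule mult_left_mono)
  thus ?thesis using EL unfolding K_def L_def y_def by (simp add: algebra_simps)
qed

section \<open>Inverses of diagonally dominant matrices\<close>

definition is_inverse_on :: "'a set \<Rightarrow> ('a \<Rightarrow> 'a \<Rightarrow> real) \<Rightarrow> ('a \<Rightarrow> 'a \<Rightarrow> real) \<Rightarrow> bool" where
  "is_inverse_on S A B \<longleftrightarrow>
     (\<forall>i\<in>S. \<forall>j\<in>S. (\<Sum>l\<in>S. A i l * B l j) = (if i = j then 1 else 0))
     \<and> (\<forall>i j. i \<notin> S \<or> j \<notin> S \<longrightarrow> B i j = 0)"

locale unit_diag_dominant =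
  fixes S :: "'a::finite set" and G :: "'a \<Rightarrow> 'a \<Rightarrow> real" and \<mu> :: real
  assumes diag: "\<And>i. i \<in> S \<Longrightarrow> G i i = 1"
    and off_diag: "\<And>i l. i \<in> S \<Longrightarrow> l \<in> S \<Longrightarrow> i \<noteq> l \<Longrightarrow> \<bar>G i l\<bar> \<le> \<mu>"
    and \<mu>_nonneg: "0 \<le> \<mu>"
    and dominant: "(real (card S) - 1) * \<mu> < 1"
begin

abbreviation "\<rho> \<equiv> 1 - (real (card S) - 1) * \<mu>"

lemma abs_solution_le:
  assumes sol: "\<And>i. i \<in> S \<Longrightarrow> (\<Sum>l\<in>S. G i l * y l) = r i" and i: "i \<in> S"
  shows "\<bar>y i\<bar> \<le> \<bar>r i\<bar> + \<mu> * (\<Sum>l\<in>S-{i}. \<bar>y l\<bar>)"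
proof -
  have "(\<Sum>l\<in>S. G i l * y l) = G i i * y i + (\<Sum>l\<in>S-{i}. G i l * y l)"
    using i by (simp add: sum.remove)
  hence "y i = r i - (\<Sum>l\<in>S-{i}. G i l * y l)" using sol diag i by auto
  hence "\<bar>y i\<bar> \<le> \<bar>r i\<bar> + \<bar>\<Sum>l\<in>S-{i}. G i l * y l\<bar>" by linarith
  also have "\<dots> \<le> \<bar>r i\<bar> + (\<Sum>l\<in>S-{i}. \<bar>G i l * y l\<bar>)"
    by (simp add: sum_abs)
  also have "(\<Sum>l\<in>S-{i}. \<bar>G i l * y l\<bar>) \<le> (\<Sum>l\<in>S-{i}. \<mu> * \<bar>y l\<bar>)"
    using off_diag i by (intro sum_mono) (auto simp: abs_mult intro!: mult_right_mono)
  finally show ?thesis by (simp add: sum_distrib_left)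
qed

lemma l1_norm_solution_le:
  assumes sol: "\<And>i. i \<in> S \<Longrightarrow> (\<Sum>l\<in>S. G i l * y l) = r i"
  shows "(\<Sum>i\<in>S. \<bar>y i\<bar>) \<le> (\<Sum>i\<in>S. \<bar>r i\<bar>) / \<rho>"
proof -
  have "(\<Sum>i\<in>S. \<bar>y i\<bar>) \<le> (\<Sum>i\<in>S. \<bar>r i\<bar> + \<mu> * ((\<Sum>l\<in>S. \<bar>y l\<bar>) - \<bar>y i\<bar>))"
    using abs_solution_le[OF sol] by (intro sum_mono) (simp add: sum_diff1)
  also have "\<dots> = (\<Sum>i\<in>S. \<bar>r i\<bar>) + (real (card S) - 1) * \<mu> * (\<Sum>i\<in>S. \<bar>y i\<bar>)"
    by (simp add: sum.distrib sum_distrib_left[symmetric] sum_subtractf algebra_simps)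
  finally have "\<rho> * (\<Sum>i\<in>S. \<bar>y i\<bar>) \<le> (\<Sum>i\<in>S. \<bar>r i\<bar>)" by (simp add: algebra_simps)
  thus ?thesis using dominant by (simp add: field_simps mult.commute)
qed

lemma homogeneous_solution_eq_0:
  assumes "\<And>i. i \<in> S \<Longrightarrow> (\<Sum>l\<in>S. G i l * y l) = 0" and "j \<in> S"
  shows "y j = 0"
proof -
  have "(\<Sum>i\<in>S. \<bar>y i\<bar>) \<le> 0"
    using l1_norm_solution_le[of y "\<lambda>_. 0"] assms(1) by simp
  hence "(\<Sum>i\<in>S. \<bar>y i\<bar>) = 0" by (simp add: sum_nonneg order_antisym)
  thus ?thesis using assms(2) by (simp add: sum_nonneg_eq_0_iff)
qed

lemma ex_inverse: "\<exists>B. is_inverse_on S G B"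
proof -
  define f :: "real^'a \<Rightarrow> real^'a" where
    "f x = (\<chi> i. if i \<in> S then (\<Sum>l\<in>S. G i l * x$l) else x$i)" for x
  have lin: "linear f"
    by (rule linearI) (auto simp: f_def vec_eq_iff sum.distrib sum_distrib_left algebra_simps)
  have "inj f"
    unfolding linear_injective_0[OF lin]
  proof (intro allI impI)
    fix x assume fx: "f x = 0"
    have "x $ j = 0" for j
    proof (cases "j \<in> S")
      case True
      have "(\<Sum>l\<in>S. G i l * x$l) = 0" if "i \<in> S" for i
      proof -
        have "f x $ i = 0" using fx by simp
        thus ?thesis using that by (simp add: f_def)
      qed
      thus ?thesis using homogeneous_solution_eq_0 True by blast
    next
      case False
      thus ?thesis using fx by (auto simp: f_def vec_eq_iff dest: spec[of _ j])
    qed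
    thus "x = 0" by (simp add: vec_eq_iff)
  qed
  hence "surj f" using linear_injective_imp_surjective[OF lin] by simp
  define x where "x j = inv f (axis j 1)" for j
  have x: "f (x j) = axis j 1" for j
    unfolding x_def by (rule surj_f_inv_f[OF \<open>surj f\<close>])
  define B where "B l j = (if l \<in> S \<and> j \<in> S then x j $ l else 0)" for l j
  have "(\<Sum>l\<in>S. G i l * B l j) = (if i = j then 1 else 0)" if "i \<in> S" "j \<in> S" for i j
  proof -
    have "(\<Sum>l\<in>S. G i l * B l j) = f (x j) $ i" using that by (simp add: B_def f_def)
    thus ?thesis by (simp add: x axis_def)
  qed
  hence "is_inverse_on S G B" by (auto simp: is_inverse_on_def B_def)
  thus ?thesis by blast
qed

lemma inverse_unique:
  assumes B1: "is_inverse_on S G B1" and B2: "is_inverse_on S G B2"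
  shows "B1 = B2"
proof (intro ext)
  fix m j
  show "B1 m j = B2 m j"
  proof (cases "m \<in> S \<and> j \<in> S")
    case True
    have "(\<Sum>l\<in>S. G i l * (B1 l j - B2 l j)) = 0" if "i \<in> S" for i
      using B1 B2 that True
      by (simp add: is_inverse_on_def right_diff_distrib sum_subtractf)
    thus ?thesis using homogeneous_solution_eq_0[of "\<lambda>l. B1 l j - B2 l j" m] True by simp
  next
    case False
    thus ?thesis using B1 B2 by (auto simp: is_inverse_on_def)
  qed
qed

lemma is_inverse_on_inv_on: "is_inverse_on S G (inv_on S G)"
proof -
  have "\<exists>!B. is_inverse_on S G B" using ex_inverse inverse_unique by blast
  hence "is_inverse_on S G (THE B. is_inverse_on S G B)" by (rule theI')
  thus ?thesis by (simp add: inv_on_def is_inverse_on_def)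
qed

lemma inv_on_column_l1_le:
  assumes j: "j \<in> S"
  shows "(\<Sum>i\<in>S. \<bar>inv_on S G i j\<bar>) \<le> 1 / \<rho>"
proof -
  have "(\<Sum>i\<in>S. \<bar>inv_on S G i j\<bar>) \<le> (\<Sum>i\<in>S. \<bar>if i = j then 1 else 0::real\<bar>) / \<rho>"
    using is_inverse_on_inv_on j by (intro l1_norm_solution_le) (simp add: is_inverse_on_def)
  also have "(\<Sum>i\<in>S. \<bar>if i = j then 1 else 0::real\<bar>) = 1"
    using j by (simp add: if_distrib sum.delta cong: if_cong)
  finally show ?thesis .
qed

lemma abs_inv_on_diag_le:
  assumes "j \<in> S"
  shows "\<bar>inv_on S G j j\<bar> \<le> 1 / \<rho>"
  using member_le_sum[of j S "\<lambda>i. \<bar>inv_on S G i j\<bar>"] inv_on_column_l1_le[OF assms] assms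
  by simp

lemma abs_inv_on_off_diag_le:
  assumes i: "i \<in> S" and j: "j \<in> S" and ij: "i \<noteq> j"
  shows "\<bar>inv_on S G i j\<bar> \<le> \<mu> / \<rho>"
proof -
  have "\<bar>inv_on S G i j\<bar> \<le> \<bar>if i = j then 1 else 0::real\<bar> + \<mu> * (\<Sum>l\<in>S-{i}. \<bar>inv_on S G l j\<bar>)"
    using is_inverse_on_inv_on i j by (intro abs_solution_le) (simp_all add: is_inverse_on_def)
  also have "\<dots> \<le> \<mu> * (\<Sum>l\<in>S. \<bar>inv_on S G l j\<bar>)"
    using ij \<mu>_nonneg by (auto intro!: mult_left_mono sum_mono2)
  also have "\<dots> \<le> \<mu> * (1 / \<rho>)"
    using inv_on_column_l1_le[OF j] \<mu>_nonneg by (rule mult_left_mono)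
  finally show ?thesis by simp
qed

end

lemma inverse_sandwich:
  assumes "is_inverse_on S G B"
  shows "(\<Sum>j\<in>S. \<Sum>l\<in>S. G j l * (\<Sum>i\<in>S. A j i * B l i)) = (\<Sum>j\<in>S. A j j)"
proof -
  have "(\<Sum>j\<in>S. \<Sum>l\<in>S. G j l * (\<Sum>i\<in>S. A j i * B l i))
      = (\<Sum>j\<in>S. \<Sum>i\<in>S. A j i * (\<Sum>l\<in>S. G j l * B l i))"
  proof (rule sum.cong[OF refl])
    fix j
    have "(\<Sum>l\<in>S. G j l * (\<Sum>i\<in>S. A j i * B l i)) = (\<Sum>l\<in>S. \<Sum>i\<in>S. A j i * (G j l * B l i))"
      by (simp add: sum_distrib_left mult_ac)
    also have "\<dots> = (\<Sum>i\<in>S. A j i * (\<Sum>l\<in>S. G j l * B l i))"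
      by (subst sum.swap) (simp add: sum_distrib_left)
    finally show "(\<Sum>l\<in>S. G j l * (\<Sum>i\<in>S. A j i * B l i)) = (\<Sum>i\<in>S. A j i * (\<Sum>l\<in>S. G j l * B l i))" .
  qed
  also have "\<dots> = (\<Sum>j\<in>S. \<Sum>i\<in>S. A j i * (if j = i then 1 else 0))"
    using assms by (intro sum.cong refl) (simp add: is_inverse_on_def)
  also have "\<dots> = (\<Sum>j\<in>S. A j j)"
    by (cases "finite S") (simp_all add: if_distrib cong: if_cong)
  finally show ?thesis .
qed

lemma trace_inverse_mult:
  assumes "is_inverse_on S G B"
  shows "(\<Sum>i\<in>S. \<Sum>l\<in>S. B i l * G l i) = real (card S)"
proof -
  have "(\<Sum>i\<in>S. \<Sum>l\<in>S. B i l * G l i) = (\<Sum>l\<in>S. \<Sum>i\<in>S. G l i * B i l)"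
    by (subst sum.swap) (simp add: mult.commute)
  also have "\<dots> = (\<Sum>l\<in>S. 1)" using assms by (intro sum.cong refl) (simp add: is_inverse_on_def)
  finally show ?thesis by simp
qed

text \<open>The resolvent identity \<open>B0 - B1 = B0 (G1 - G0) B1\<close>, in trace form.\<close>
lemma trace_inverse_diff:
  assumes B0: "is_inverse_on S G0 B0" and B1: "is_inverse_on S G1 B1"
    and sym: "\<And>i j. G0 i j = G0 j i"
  shows "(\<Sum>j\<in>S. B0 j j - B1 j j)
       = (\<Sum>j\<in>S. \<Sum>l\<in>S. (G1 j l - G0 j l) * (\<Sum>i\<in>S. B0 j i * B1 l i))"
proof -
  have "(\<Sum>j\<in>S. \<Sum>l\<in>S. G0 j l * (\<Sum>i\<in>S. B0 j i * B1 l i))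
      = (\<Sum>l\<in>S. \<Sum>j\<in>S. G0 l j * (\<Sum>i\<in>S. B1 l i * B0 j i))"
    by (subst sum.swap) (intro sum.cong refl, simp add: sym mult.commute)
  also have "\<dots> = (\<Sum>l\<in>S. B1 l l)" by (rule inverse_sandwich[OF B0])
  finally have "(\<Sum>j\<in>S. \<Sum>l\<in>S. G0 j l * (\<Sum>i\<in>S. B0 j i * B1 l i)) = (\<Sum>l\<in>S. B1 l l)" .
  moreover have "(\<Sum>j\<in>S. \<Sum>l\<in>S. G1 j l * (\<Sum>i\<in>S. B0 j i * B1 l i)) = (\<Sum>j\<in>S. B0 j j)"
    by (rule inverse_sandwich[OF B1])
  ultimately show ?thesis by (simp add: left_diff_distrib sum_subtractf)
qed

section \<open>Sums over a random support\<close>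

lemma integrable_pmf_finite_type [simp]:
  fixes M :: "'a::finite pmf" and f :: "'a \<Rightarrow> real"
  shows "integrable (measure_pmf M) f"
  by (rule integrable_measure_pmf_finite) simp

lemma expectation_pmf_if:
  fixes M :: "'a::finite pmf"
  shows "measure_pmf.expectation M (\<lambda>x. if P x then c else 0) = c * measure_pmf.prob M {x. P x}"
proof -
  have "(\<lambda>x. if P x then c else 0) = (\<lambda>x. c * indicator {x. P x} x)"
    by (auto simp: indicator_def)
  thus ?thesis by simp
qed

lemma expectation_pmf_mono:
  fixes M :: "'a::finite pmf" and f g :: "'a \<Rightarrow> real"
  assumes "\<And>x. x \<in> set_pmf M \<Longrightarrow> f x \<le> g x"
  shows "measure_pmf.expectation M f \<le> measure_pmf.expectation M g"
  using assms by (intro integral_mono_AE) (simp_all add: AE_measure_pmf_iff)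

lemma abs_expectation_pmf_le:
  fixes M :: "'a::finite pmf" and f g :: "'a \<Rightarrow> real"
  assumes "\<And>x. x \<in> set_pmf M \<Longrightarrow> \<bar>f x\<bar> \<le> g x"
  shows "\<bar>measure_pmf.expectation M f\<bar> \<le> measure_pmf.expectation M g"
proof -
  have "\<bar>measure_pmf.expectation M f\<bar> \<le> measure_pmf.expectation M (\<lambda>x. \<bar>f x\<bar>)"
    by (rule integral_abs_bound)
  also have "\<dots> \<le> measure_pmf.expectation M g" using assms by (rule expectation_pmf_mono)
  finally show ?thesis .
qed

lemma expectation_sum_over_random_set:
  fixes J :: "'p::finite set pmf" and f :: "'p \<Rightarrow> real"
  shows "measure_pmf.expectation J (\<lambda>S. \<Sum>j\<in>S. f j)
       = (\<Sum>j\<in>UNIV. f j * measure_pmf.prob J {S. j \<in> S})"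
proof -
  have "(\<Sum>j\<in>S. f j) = (\<Sum>j\<in>UNIV. if j \<in> S then f j else 0)" for S
    by (simp add: sum.If_cases Int_absorb1)
  hence "measure_pmf.expectation J (\<lambda>S. \<Sum>j\<in>S. f j)
       = (\<Sum>j\<in>UNIV. measure_pmf.expectation J (\<lambda>S. if j \<in> S then f j else 0))"
    by simp
  thus ?thesis by (simp add: expectation_pmf_if)
qed

lemma expectation_sum_over_random_pairs:
  fixes J :: "'p::finite set pmf" and g :: "'p \<Rightarrow> 'p \<Rightarrow> real"
  shows "measure_pmf.expectation J (\<lambda>S. \<Sum>i\<in>S. \<Sum>l\<in>S-{i}. g i l)
       = (\<Sum>i\<in>UNIV. \<Sum>l\<in>UNIV-{i}. g i l * measure_pmf.prob J {S. i \<in> S \<and> l \<in> S})"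
proof -
  have "(\<Sum>i\<in>S. \<Sum>l\<in>S-{i}. g i l)
      = (\<Sum>i\<in>UNIV. \<Sum>l\<in>UNIV-{i}. if i \<in> S \<and> l \<in> S then g i l else 0)" for S
  proof -
    have "(\<Sum>l\<in>UNIV-{i}. if i \<in> S \<and> l \<in> S then g i l else 0)
        = (if i \<in> S then (\<Sum>l\<in>S-{i}. g i l) else 0)" for i
      by (auto simp: sum.If_cases Diff_Int_distrib2 intro: sum.cong)
    thus ?thesis by (simp add: sum.If_cases Int_absorb1)
  qed
  hence "measure_pmf.expectation J (\<lambda>S. \<Sum>i\<in>S. \<Sum>l\<in>S-{i}. g i l)
       = (\<Sum>i\<in>UNIV. \<Sum>l\<in>UNIV-{i}.
            measure_pmf.expectation J (\<lambda>S. if i \<in> S \<and> l \<in> S then g i l else 0))"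
    by simp
  thus ?thesis by (simp add: expectation_pmf_if)
qed

locale random_support =
  fixes J :: "'p::finite set pmf" and k :: nat
  assumes card_support: "\<forall>S\<in>set_pmf J. card S = k"
    and prob_mem: "\<forall>j. measure_pmf.prob J {S. j \<in> S} = real k / real CARD('p)"
    and prob_pair_mem: "\<forall>i j. i \<noteq> j \<longrightarrow> measure_pmf.prob J {S. i \<in> S \<and> j \<in> S}
                   = real k * (real k - 1) / (real CARD('p) * (real CARD('p) - 1))"
begin

lemma k_le_card: "k \<le> CARD('p)"
proof -
  obtain S where "S \<in> set_pmf J" using set_pmf_not_empty[of J] by blast
  hence "card S = k" using card_support by auto
  moreover have "card S \<le> CARD('p)" by (rule card_mono) auto
  ultimately show ?thesis by simp
qed

text \<open>For \<open>p = 1\<close> the left-hand side is \<open>0\<close> by division by zero.\<close>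
lemma pair_prob_le:
  "real k * (real k - 1) / (real CARD('p) * (real CARD('p) - 1))
     \<le> (real k / real CARD('p)) * (real k / real CARD('p))"
proof (cases "CARD('p) = 1")
  case False
  moreover have "0 < CARD('p)" by simp
  ultimately have p2: "2 \<le> real CARD('p)" by linarith
  have "(real k - 1) / (real CARD('p) - 1) \<le> real k / real CARD('p)"
    using p2 k_le_card by (simp add: field_simps)
  hence "(real k / real CARD('p)) * ((real k - 1) / (real CARD('p) - 1))
       \<le> (real k / real CARD('p)) * (real k / real CARD('p))"
    by (rule mult_left_mono) simp
  thus ?thesis by simp
qed simp

lemma expectation_sum:
  "measure_pmf.expectation J (\<lambda>S. \<Sum>j\<in>S. f j) = (real k / real CARD('p)) * (\<Sum>j\<in>UNIV. f j)"
  unfolding expectation_sum_over_random_set using prob_mem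
  by (simp add: sum_distrib_left sum_divide_distrib mult_ac)

lemma expectation_pair_sum_le:
  assumes "\<And>i l. 0 \<le> g i l"
  shows "measure_pmf.expectation J (\<lambda>S. \<Sum>i\<in>S. \<Sum>l\<in>S-{i}. g i l)
       \<le> (real k / real CARD('p)) * (real k / real CARD('p)) * (\<Sum>i\<in>UNIV. \<Sum>l\<in>UNIV-{i}. g i l)"
proof -
  have "measure_pmf.expectation J (\<lambda>S. \<Sum>i\<in>S. \<Sum>l\<in>S-{i}. g i l)
      = real k * (real k - 1) / (real CARD('p) * (real CARD('p) - 1))
          * (\<Sum>i\<in>UNIV. \<Sum>l\<in>UNIV-{i}. g i l)"
    unfolding expectation_sum_over_random_pairs using prob_pair_mem
    by (simp add: sum_distrib_left sum_divide_distrib mult_ac)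
  also have "\<dots> \<le> (real k / real CARD('p)) * (real k / real CARD('p)) * (\<Sum>i\<in>UNIV. \<Sum>l\<in>UNIV-{i}. g i l)"
    using pair_prob_le assms by (intro mult_right_mono sum_nonneg) auto
  finally show ?thesis .
qed

end

section \<open>Projections, coherence and restricted isometry\<close>

lemma orth_proj_span_ex1:
  fixes A :: "'a::euclidean_space set"
  shows "\<exists>!y. y \<in> span A \<and> (\<forall>z\<in>span A. inner (x - y) z = 0)"
proof -
  obtain y z where y: "y \<in> span A" and z: "\<And>w. w \<in> span A \<Longrightarrow> orthogonal z w"
    and xyz: "x = y + z"
    using orthogonal_subspace_decomp_exists[of A x] by blast
  have "y \<in> span A \<and> (\<forall>w\<in>span A. inner (x - y) w = 0)"
    using y z xyz by (simp add: orthogonal_def)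
  moreover have "y1 = y2"
    if "y1 \<in> span A \<and> (\<forall>w\<in>span A. inner (x - y1) w = 0)"
      and "y2 \<in> span A \<and> (\<forall>w\<in>span A. inner (x - y2) w = 0)" for y1 y2
  proof -
    have "y1 - y2 \<in> span A" using that by (simp add: span_diff)
    hence "inner (y1 - y2) (y1 - y2) = inner (x - y2) (y1 - y2) - inner (x - y1) (y1 - y2)"
      and "inner (x - y2) (y1 - y2) = 0" "inner (x - y1) (y1 - y2) = 0"
      using that by (simp_all add: inner_diff_left)
    thus ?thesis by simp
  qed
  ultimately show ?thesis by blast
qed

lemma orth_proj_span_in_span: "orth_proj (span A) x \<in> span A"
  and orth_proj_span_orthogonal: "z \<in> span A \<Longrightarrow> inner (x - orth_proj (span A) x) z = 0"
  using theI'[OF orth_proj_span_ex1[of A x]] unfolding orth_proj_def by auto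

lemma orth_proj_span_eqI:
  assumes "y \<in> span A" "\<And>z. z \<in> span A \<Longrightarrow> inner (x - y) z = 0"
  shows "orth_proj (span A) x = y"
  unfolding orth_proj_def by (rule the1_equality[OF orth_proj_span_ex1]) (use assms in auto)

lemma orth_proj_span_diff_span:
  assumes "y \<in> span A"
  shows "orth_proj (span A) (y - x) = y - orth_proj (span A) x"
proof (rule orth_proj_span_eqI)
  show "y - orth_proj (span A) x \<in> span A"
    using assms orth_proj_span_in_span by (rule span_diff)
  fix z assume "z \<in> span A"
  hence "inner (x - orth_proj (span A) x) z = 0" by (rule orth_proj_span_orthogonal)
  thus "inner (y - x - (y - orth_proj (span A) x)) z = 0" by (simp add: inner_diff_left)
qed

lemma inner_orth_proj_span_residual:
  "inner x (x - orth_proj (span A) x) = (norm x)\<^sup>2 - (norm (orth_proj (span A) x))\<^sup>2"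
  and inner_orth_proj_span_residual_nonneg: "0 \<le> inner x (x - orth_proj (span A) x)"
proof -
  let ?P = "orth_proj (span A) x"
  have o: "inner (x - ?P) ?P = 0" by (rule orth_proj_span_orthogonal[OF orth_proj_span_in_span])
  thus "inner x (x - ?P) = (norm x)\<^sup>2 - (norm ?P)\<^sup>2"
    by (simp add: power2_norm_eq_inner inner_diff_left inner_diff_right inner_commute)
  have "inner x (x - ?P) = inner (x - ?P) (x - ?P) + inner (x - ?P) ?P"
    by (simp add: inner_diff_left inner_diff_right inner_commute)
  thus "0 \<le> inner x (x - ?P)" using o by simp
qed

lemma norm_orth_proj_span_le_lower_frame_bound:
  fixes f :: "'i \<Rightarrow> 'a::euclidean_space"
  assumes fin: "finite S" and inj: "inj_on f S" and \<sigma>: "0 < \<sigma>"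
    and frame: "\<And>z. \<sigma> * sqrt (\<Sum>l\<in>S. (z l)\<^sup>2) \<le> norm (\<Sum>l\<in>S. z l *\<^sub>R f l)"
  shows "(norm (orth_proj (span (f ` S)) u))\<^sup>2 \<le> (\<Sum>l\<in>S. (inner (f l) u)\<^sup>2) / \<sigma>\<^sup>2"
proof -
  let ?P = "orth_proj (span (f ` S)) u"
  obtain c where "?P = (\<Sum>v\<in>f ` S. c v *\<^sub>R v)"
    using orth_proj_span_in_span[of "f ` S" u] span_finite[of "f ` S"] fin by auto
  hence Pz: "?P = (\<Sum>l\<in>S. c (f l) *\<^sub>R f l)" by (simp add: sum.reindex[OF inj])
  let ?N = "norm ?P" and ?Z = "sqrt (\<Sum>l\<in>S. (c (f l))\<^sup>2)" and ?B = "sqrt (\<Sum>l\<in>S. (inner (f l) u)\<^sup>2)"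
  have "inner (u - ?P) ?P = 0" by (rule orth_proj_span_orthogonal[OF orth_proj_span_in_span])
  hence "inner u ?P - inner ?P ?P = 0" by (simp only: inner_diff_left)
  hence "?N\<^sup>2 = inner ?P u" by (simp add: power2_norm_eq_inner inner_commute)
  also have "\<dots> = (\<Sum>l\<in>S. c (f l) * inner (f l) u)" by (subst Pz) (simp add: inner_sum_left)
  also have "\<dots> \<le> ?Z * ?B"
  proof -
    have "(\<Sum>l\<in>S. c (f l) * inner (f l) u)\<^sup>2 \<le> (\<Sum>l\<in>S. (c (f l))\<^sup>2) * (\<Sum>l\<in>S. (inner (f l) u)\<^sup>2)"
      by (rule Cauchy_Schwarz_ineq_sum)
    hence "sqrt ((\<Sum>l\<in>S. c (f l) * inner (f l) u)\<^sup>2)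
         \<le> sqrt ((\<Sum>l\<in>S. (c (f l))\<^sup>2) * (\<Sum>l\<in>S. (inner (f l) u)\<^sup>2))"
      by (rule real_sqrt_le_mono)
    thus ?thesis by (simp add: real_sqrt_mult)
  qed
  also have "\<dots> \<le> (?N / \<sigma>) * ?B"
    using frame[of "\<lambda>l. c (f l)"] \<sigma> Pz by (intro mult_right_mono) (simp_all add: field_simps sum_nonneg)
  finally have "\<sigma> * ?N * ?N \<le> ?B * ?N" using \<sigma> by (simp add: power2_eq_square field_simps)
  hence "\<sigma> * ?N \<le> ?B" by (cases "?N = 0") (simp_all add: sum_nonneg)
  hence "?N \<le> ?B / \<sigma>" using \<sigma> by (simp add: field_simps)
  hence "?N\<^sup>2 \<le> (?B / \<sigma>)\<^sup>2" by (intro power_mono) simp_all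
  thus ?thesis by (simp add: power_divide sum_nonneg)
qed

lemma specnorm_nonneg: "0 \<le> specnorm D"
  unfolding specnorm_def by (rule onorm_pos_le[OF matrix_vector_mul_bounded_linear])

lemma norm_mult_vec_le_specnorm: "norm (D *v x) \<le> specnorm D * norm x"
  unfolding specnorm_def by (rule onorm[OF matrix_vector_mul_bounded_linear])

lemma norm_column_le_specnorm: "norm (column j D) \<le> specnorm D"
  using norm_mult_vec_le_specnorm[of D "axis j 1"]
  by (simp add: matrix_vector_mult_basis norm_axis_1)

lemma power2_norm_vec: "(norm (x::real^'n))\<^sup>2 = (\<Sum>l\<in>UNIV. (x$l)\<^sup>2)"
  unfolding power2_norm_eq_inner by (simp add: inner_vec_def power2_eq_square)

lemma inner_mult_vec: "inner (D *v y) u = (\<Sum>l\<in>UNIV. y$l * inner (column l D) u)"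
proof -
  have "inner (D *v y) u = (\<Sum>i\<in>UNIV. \<Sum>l\<in>UNIV. y$l * (D$i$l * u$i))"
    by (simp add: inner_vec_def matrix_vector_mult_def sum_distrib_right sum_distrib_left mult_ac)
  also have "\<dots> = (\<Sum>l\<in>UNIV. \<Sum>i\<in>UNIV. y$l * (D$i$l * u$i))" by (rule sum.swap)
  also have "\<dots> = (\<Sum>l\<in>UNIV. y$l * inner (column l D) u)"
    by (simp add: inner_vec_def column_def sum_distrib_left)
  finally show ?thesis .
qed

lemma norm_columns_inner_le_specnorm:
  "norm (\<chi> l. inner (column l D) u) \<le> specnorm D * norm u"
proof -
  define y where "y = (\<chi> l. inner (column l D) u)"
  have "(norm y)\<^sup>2 = inner (D *v y) u"
    unfolding inner_mult_vec power2_norm_vec by (simp add: y_def power2_eq_square)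
  also have "\<dots> \<le> norm (D *v y) * norm u" by (rule real_inner_class.Cauchy_Schwarz_ineq2[THEN order_trans[OF abs_ge_self]])
  also have "\<dots> \<le> specnorm D * norm y * norm u"
    using norm_mult_vec_le_specnorm[of D y] by (simp add: mult_right_mono)
  finally have "norm y * norm y \<le> norm y * (specnorm D * norm u)"
    by (simp add: power2_eq_square mult_ac)
  thus ?thesis
    using specnorm_nonneg[of D] unfolding y_def[symmetric]
    by (cases "norm y = 0") (simp_all add: mult_le_cancel_left_pos)
qed

lemma finite_off_diag_inners: "finite {\<bar>inner (column i D) (column j D)\<bar> | i j. i \<noteq> j}"
  by (rule finite_subset[of _ "(\<lambda>(i,j). \<bar>inner (column i D) (column j D)\<bar>) ` UNIV"]) auto

lemma mu0_nonneg: "0 \<le> mu0 D"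
  unfolding mu0_def using finite_off_diag_inners[of D] by (simp add: Max_ge_iff)

lemma abs_inner_columns_le_mu0: "i \<noteq> j \<Longrightarrow> \<bar>inner (column i D) (column j D)\<bar> \<le> mu0 D"
  unfolding mu0_def using finite_off_diag_inners[of D] by (intro Max_ge) auto

definition rip_admissible :: "real^'p^'m \<Rightarrow> nat \<Rightarrow> real set" where
  "rip_admissible D k = {\<delta>. \<forall>J (z::'p \<Rightarrow> real). card J = k \<longrightarrow>
      (1 - \<delta>) * (\<Sum>j\<in>J. (z j)\<^sup>2) \<le> (norm (\<Sum>j\<in>J. z j *\<^sub>R column j D))\<^sup>2 \<and>
      (norm (\<Sum>j\<in>J. z j *\<^sub>R column j D))\<^sup>2 \<le> (1 + \<delta>) * (\<Sum>j\<in>J. (z j)\<^sup>2)}"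

lemma rip_eq_Inf_rip_admissible: "rip D k = Inf (rip_admissible D k)"
  by (simp add: rip_def rip_admissible_def)

lemma power2_norm_sum_unit_columns:
  assumes unit: "\<forall>j. norm (column j D) = 1" and fin: "finite A"
  shows "(norm (\<Sum>j\<in>A. z j *\<^sub>R column j D))\<^sup>2
       = (\<Sum>i\<in>A. (z i)\<^sup>2) + (\<Sum>i\<in>A. \<Sum>j\<in>A-{i}. z i * z j * inner (column i D) (column j D))"
proof -
  have "(norm (\<Sum>j\<in>A. z j *\<^sub>R column j D))\<^sup>2
      = (\<Sum>j\<in>A. \<Sum>n\<in>A. z j * (z n * inner (column n D) (column j D)))"
    by (simp add: power2_norm_eq_inner inner_sum_left inner_sum_right sum_distrib_left mult_ac)
  also have "\<dots> = (\<Sum>i\<in>A. \<Sum>j\<in>A. z i * z j * inner (column i D) (column j D))"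
    by (subst sum.swap) (simp add: mult_ac)
  also have "\<dots> = (\<Sum>i\<in>A. (z i)\<^sup>2 + (\<Sum>j\<in>A-{i}. z i * z j * inner (column i D) (column j D)))"
  proof (rule sum.cong[OF refl])
    fix i assume i: "i \<in> A"
    have "inner (column i D) (column i D) = 1"
      using unit by (metis power2_norm_eq_inner power_one)
    thus "(\<Sum>j\<in>A. z i * z j * inner (column i D) (column j D))
        = (z i)\<^sup>2 + (\<Sum>j\<in>A-{i}. z i * z j * inner (column i D) (column j D))"
      by (subst sum.remove[OF fin i]) (simp add: power2_eq_square)
  qed
  finally show ?thesis by (simp add: sum.distrib)
qed

lemma sum_off_diag_half_squares:
  fixes z :: "'a \<Rightarrow> real"
  assumes fin: "finite A"
  shows "(\<Sum>i\<in>A. \<Sum>j\<in>A-{i}. ((z i)\<^sup>2 + (z j)\<^sup>2) / 2) = (real (card A) - 1) * (\<Sum>i\<in>A. (z i)\<^sup>2)"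
proof -
  have "(\<Sum>j\<in>A-{i}. ((z i)\<^sup>2 + (z j)\<^sup>2) / 2)
      = ((real (card A) - 1) * (z i)\<^sup>2 + ((\<Sum>j\<in>A. (z j)\<^sup>2) - (z i)\<^sup>2)) / 2" if i: "i \<in> A" for i
  proof -
    have "1 \<le> card A" using fin i by (auto simp: Suc_le_eq card_gt_0_iff)
    moreover have "card (A - {i}) = card A - 1" using i by (simp add: card_Diff_singleton)
    ultimately show ?thesis
      using fin i by (simp add: sum.distrib sum_divide_distrib[symmetric] sum_diff1 of_nat_diff)
  qed
  hence "(\<Sum>i\<in>A. \<Sum>j\<in>A-{i}. ((z i)\<^sup>2 + (z j)\<^sup>2) / 2)
      = (\<Sum>i\<in>A. ((real (card A) - 1) * (z i)\<^sup>2 + ((\<Sum>j\<in>A. (z j)\<^sup>2) - (z i)\<^sup>2)) / 2)"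
    by (rule sum.cong[OF refl])
  also have "\<dots> = (real (card A) - 1) * (\<Sum>i\<in>A. (z i)\<^sup>2)"
    by (simp add: sum_divide_distrib[symmetric] sum.distrib sum_subtractf sum_distrib_left[symmetric]
        algebra_simps, simp add: field_simps)
  finally show ?thesis .
qed

lemma abs_sum_off_diag_le_mu0:
  assumes "finite A"
  shows "\<bar>\<Sum>i\<in>A. \<Sum>j\<in>A-{i}. z i * z j * inner (column i D) (column j D)\<bar>
     \<le> (real (card A) - 1) * mu0 D * (\<Sum>i\<in>A. (z i)\<^sup>2)"
proof -
  have "\<bar>\<Sum>i\<in>A. \<Sum>j\<in>A-{i}. z i * z j * inner (column i D) (column j D)\<bar>
      \<le> (\<Sum>i\<in>A. \<Sum>j\<in>A-{i}. \<bar>z i * z j * inner (column i D) (column j D)\<bar>)"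
    by (rule order_trans[OF sum_abs sum_mono[OF sum_abs]])
  also have "\<dots> \<le> (\<Sum>i\<in>A. \<Sum>j\<in>A-{i}. mu0 D * (((z i)\<^sup>2 + (z j)\<^sup>2) / 2))"
  proof (intro sum_mono)
    fix i j assume "j \<in> A - {i}"
    hence ij: "i \<noteq> j" by auto
    have "2 * \<bar>z i * z j\<bar> \<le> (z i)\<^sup>2 + (z j)\<^sup>2"
      using sum_squares_bound[of "\<bar>z i\<bar>" "\<bar>z j\<bar>"] by (simp add: abs_mult)
    hence "\<bar>z i * z j\<bar> * \<bar>inner (column i D) (column j D)\<bar> \<le> ((z i)\<^sup>2 + (z j)\<^sup>2) / 2 * mu0 D"
      using abs_inner_columns_le_mu0[OF ij] by (intro mult_mono) auto
    thus "\<bar>z i * z j * inner (column i D) (column j D)\<bar> \<le> mu0 D * (((z i)\<^sup>2 + (z j)\<^sup>2) / 2)"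
      by (simp add: abs_mult mult_ac)
  qed
  also have "\<dots> = mu0 D * (\<Sum>i\<in>A. \<Sum>j\<in>A-{i}. ((z i)\<^sup>2 + (z j)\<^sup>2) / 2)"
    by (simp add: sum_distrib_left)
  also have "\<dots> = (real (card A) - 1) * mu0 D * (\<Sum>i\<in>A. (z i)\<^sup>2)"
    by (simp add: sum_off_diag_half_squares[OF assms])
  finally show ?thesis .
qed

context
  fixes D :: "real^'p^'m" and k :: nat
  assumes unit: "\<forall>j. norm (column j D) = 1" and k_pos: "1 \<le> k" and k_le_card: "k \<le> CARD('p)"
begin

lemma coherence_rip_admissible: "(real k - 1) * mu0 D \<in> rip_admissible D k"
  unfolding rip_admissible_def
proof (intro CollectI allI impI conjI)
  fix A :: "'p set" and z :: "'p \<Rightarrow> real" assume "card A = k"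
  hence b: "\<bar>\<Sum>i\<in>A. \<Sum>j\<in>A-{i}. z i * z j * inner (column i D) (column j D)\<bar>
        \<le> (real k - 1) * mu0 D * (\<Sum>i\<in>A. (z i)\<^sup>2)"
    using abs_sum_off_diag_le_mu0[of A z D] by simp
  show "(1 - (real k - 1) * mu0 D) * (\<Sum>j\<in>A. (z j)\<^sup>2) \<le> (norm (\<Sum>j\<in>A. z j *\<^sub>R column j D))\<^sup>2"
    unfolding power2_norm_sum_unit_columns[OF unit finite] using b by (simp add: algebra_simps)
  show "(norm (\<Sum>j\<in>A. z j *\<^sub>R column j D))\<^sup>2 \<le> (1 + (real k - 1) * mu0 D) * (\<Sum>j\<in>A. (z j)\<^sup>2)"
    unfolding power2_norm_sum_unit_columns[OF unit finite] using b by (simp add: algebra_simps)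
qed

lemma rip_admissible_nonneg:
  assumes "\<delta> \<in> rip_admissible D k"
  shows "0 \<le> \<delta>"
proof -
  obtain A :: "'p set" where A: "card A = k" using k_le_card by (meson ex_card)
  then obtain j where j: "j \<in> A" using k_pos by fastforce
  let ?z = "\<lambda>i. if i = j then 1 else (0::real)"
  have lower: "\<forall>J (z::'p \<Rightarrow> real). card J = k \<longrightarrow>
      (1 - \<delta>) * (\<Sum>j\<in>J. (z j)\<^sup>2) \<le> (norm (\<Sum>j\<in>J. z j *\<^sub>R column j D))\<^sup>2"
    using assms by (simp add: rip_admissible_def)
  have "(1 - \<delta>) * (\<Sum>i\<in>A. (?z i)\<^sup>2) \<le> (norm (\<Sum>i\<in>A. ?z i *\<^sub>R column i D))\<^sup>2"
    by (rule lower[rule_format, OF A])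
  moreover have "(\<Sum>i\<in>A. (?z i)\<^sup>2) = 1" "(\<Sum>i\<in>A. ?z i *\<^sub>R column i D) = column j D"
  proof -
    have "\<And>i. (?z i)\<^sup>2 = ?z i" "\<And>i. ?z i *\<^sub>R column i D = (if i = j then column i D else 0)"
      by simp_all
    thus "(\<Sum>i\<in>A. (?z i)\<^sup>2) = 1" "(\<Sum>i\<in>A. ?z i *\<^sub>R column i D) = column j D"
      using j by simp_all
  qed
  ultimately show ?thesis using unit by simp
qed

lemma rip_nonneg: "0 \<le> rip D k"
  unfolding rip_eq_Inf_rip_admissible
  using coherence_rip_admissible rip_admissible_nonneg by (intro cInf_greatest) auto

lemma rip_le_coherence: "rip D k \<le> (real k - 1) * mu0 D"
  unfolding rip_eq_Inf_rip_admissible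
  using rip_admissible_nonneg by (intro cInf_lower[OF coherence_rip_admissible] bdd_belowI)

lemma rip_lower_bound:
  assumes "card A = k"
  shows "(1 - rip D k) * (\<Sum>j\<in>A. (z j)\<^sup>2) \<le> (norm (\<Sum>j\<in>A. z j *\<^sub>R column j D))\<^sup>2"
proof (cases "(\<Sum>j\<in>A. (z j)\<^sup>2) = 0")
  case False
  let ?s = "\<Sum>j\<in>A. (z j)\<^sup>2" and ?N = "(norm (\<Sum>j\<in>A. z j *\<^sub>R column j D))\<^sup>2"
  have s: "0 < ?s" using False by (simp add: sum_nonneg order_le_neq_trans)
  have "1 - ?N / ?s \<le> Inf (rip_admissible D k)"
  proof (rule cInf_greatest)
    show "rip_admissible D k \<noteq> {}" using coherence_rip_admissible by blast
    fix \<delta> assume "\<delta> \<in> rip_admissible D k"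
    hence "(1 - \<delta>) * ?s \<le> ?N" using assms unfolding rip_admissible_def by blast
    thus "1 - ?N / ?s \<le> \<delta>" using s by (simp add: field_simps)
  qed
  thus ?thesis using s unfolding rip_eq_Inf_rip_admissible by (simp add: field_simps)
qed simp

end

section \<open>The perturbed dictionary\<close>

locale perturbed_dictionary =
  fixes D0 W :: "real^'p^'m" and v :: "real^'p" and t :: real and k :: nat
  assumes unit_cols: "\<forall>j. norm (column j D0) = 1"
    and t_nonneg: "0 \<le> t"
    and coh: "real k * mu D0 t < 1 / 2"
    and W_orth: "\<forall>j. inner (column j W) (column j D0) = 0"
    and W_unit: "\<forall>j. norm (column j W) = 1"
    and v_unit: "norm v = 1"
    and k_pos: "1 \<le> k"
    and k_le_card: "k \<le> CARD('p)"
begin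

abbreviation "d j \<equiv> column j D0"
abbreviation "w j \<equiv> column j W"
abbreviation "D\<^sub>t \<equiv> Dt D0 W v t"
abbreviation "d\<^sub>t j \<equiv> column j D\<^sub>t"
abbreviation "e j \<equiv> d\<^sub>t j - d j"
abbreviation "\<mu> \<equiv> mu D0 t"
abbreviation "a \<equiv> specnorm D0"

lemma column_Dt: "d\<^sub>t j = cos (v$j * t) *\<^sub>R d j + sin (v$j * t) *\<^sub>R w j"
  by (simp add: column_def Dt_def vec_eq_iff)

lemma inner_d_d: "inner (d j) (d j) = 1"
  using unit_cols by (metis power2_norm_eq_inner power_one)

lemma inner_w_w: "inner (w j) (w j) = 1"
  using W_unit by (metis power2_norm_eq_inner power_one)

lemma inner_w_d: "inner (w j) (d j) = 0"
  using W_orth by simp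

lemma inner_dt_dt: "inner (d\<^sub>t j) (d\<^sub>t j) = 1"
proof -
  have "inner (d\<^sub>t j) (d\<^sub>t j) = (cos (v$j * t))\<^sup>2 * inner (d j) (d j)
      + 2 * cos (v$j * t) * sin (v$j * t) * inner (w j) (d j) + (sin (v$j * t))\<^sup>2 * inner (w j) (w j)"
    unfolding column_Dt
    by (simp add: inner_add_left inner_add_right inner_commute power2_eq_square algebra_simps)
  thus ?thesis by (simp add: inner_d_d inner_w_w inner_w_d)
qed

lemma inner_dt_d: "inner (d\<^sub>t j) (d j) = cos (v$j * t)"
  unfolding column_Dt by (simp add: inner_add_left inner_d_d inner_w_d)

lemma inner_e_e: "inner (e j) (e j) = 2 - 2 * cos (v$j * t)"
  using inner_dt_d[of j] inner_commute[of "d j" "d\<^sub>t j"]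
  by (simp add: inner_diff_left inner_diff_right inner_dt_dt inner_d_d)

lemma inner_dt_e: "inner (d\<^sub>t j) (e j) = inner (e j) (e j) / 2"
proof -
  have "inner (d\<^sub>t j) (e j) = 1 - cos (v$j * t)"
    by (simp add: inner_diff_right inner_dt_dt inner_dt_d)
  thus ?thesis by (simp add: inner_e_e)
qed

lemma abs_v_le_1: "\<bar>v$j\<bar> \<le> 1"
  using component_le_norm_cart[of v j] v_unit by simp

lemma sum_v_squares: "(\<Sum>j\<in>UNIV. (v$j)\<^sup>2) = 1"
  using v_unit by (simp add: power2_norm_vec[symmetric])

lemma v_square_le_1: "(v$j)\<^sup>2 \<le> 1"
  using abs_v_le_1 by (simp add: abs_square_le_1)

lemma sum_v_fourth_powers_le_1: "(\<Sum>j\<in>UNIV. (v$j) ^ 4) \<le> 1"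
proof -
  have "(v$j) ^ 4 \<le> (v$j)\<^sup>2" for j
    using mult_right_mono[OF v_square_le_1[of j], of "(v$j)\<^sup>2"]
    by (simp add: power4_eq_xxxx power2_eq_square)
  hence "(\<Sum>j\<in>UNIV. (v$j) ^ 4) \<le> (\<Sum>j\<in>UNIV. (v$j)\<^sup>2)" by (rule sum_mono)
  thus ?thesis using sum_v_squares by simp
qed

lemma inner_e_e_le: "inner (e j) (e j) \<le> (v$j)\<^sup>2 * t\<^sup>2"
  using cos_ge_one_minus_half_square[of "v$j * t"] by (simp add: inner_e_e power_mult_distrib)

lemma inner_e_e_ge: "(v$j)\<^sup>2 * t\<^sup>2 - (v$j) ^ 4 * t ^ 4 / 12 \<le> inner (e j) (e j)"
  using cos_le_quartic_taylor[of "v$j * t"] by (simp add: inner_e_e power_mult_distrib)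

lemma inner_e_e_le_t_square: "inner (e j) (e j) \<le> t\<^sup>2"
  using inner_e_e_le[of j] mult_right_mono[OF v_square_le_1[of j], of "t\<^sup>2"] by simp

definition pert_sq :: real where
  "pert_sq = (\<Sum>j\<in>UNIV. inner (e j) (e j))"

lemma pert_sq_le: "pert_sq \<le> t\<^sup>2"
proof -
  have "pert_sq \<le> (\<Sum>j\<in>UNIV. (v$j)\<^sup>2 * t\<^sup>2)"
    unfolding pert_sq_def by (rule sum_mono) (rule inner_e_e_le)
  also have "\<dots> = t\<^sup>2" using sum_v_squares by (simp add: sum_distrib_right[symmetric])
  finally show ?thesis .
qed

lemma pert_sq_ge: "t\<^sup>2 - t ^ 4 / 12 \<le> pert_sq"
proof -
  have "(\<Sum>j\<in>UNIV. (v$j)\<^sup>2 * t\<^sup>2 - (v$j) ^ 4 * t ^ 4 / 12) \<le> pert_sq"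
    unfolding pert_sq_def by (rule sum_mono) (rule inner_e_e_ge)
  moreover have "(\<Sum>j\<in>UNIV. (v$j)\<^sup>2 * t\<^sup>2 - (v$j) ^ 4 * t ^ 4 / 12)
      = t\<^sup>2 - (\<Sum>j\<in>UNIV. (v$j) ^ 4) * t ^ 4 / 12"
    using sum_v_squares
    by (simp add: sum_subtractf sum_distrib_right[symmetric] sum_divide_distrib[symmetric])
  moreover have "(\<Sum>j\<in>UNIV. (v$j) ^ 4) * t ^ 4 \<le> 1 * t ^ 4"
    by (rule mult_right_mono[OF sum_v_fourth_powers_le_1]) simp
  ultimately show ?thesis by linarith
qed

lemma mu_ge_mu0: "mu0 D0 \<le> \<mu>" and mu_nonneg: "0 \<le> \<mu>" and three_t_le_k_mu: "3 * t \<le> real k * \<mu>"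
proof -
  show "mu0 D0 \<le> \<mu>" using t_nonneg by (simp add: mu_def)
  show "0 \<le> \<mu>" using mu0_nonneg[of D0] t_nonneg by (simp add: mu_def)
  have "3 * t \<le> \<mu>" using mu0_nonneg[of D0] by (simp add: mu_def)
  also have "\<mu> \<le> real k * \<mu>" using k_pos \<open>0 \<le> \<mu>\<close> by (simp add: mult_le_cancel_right1)
  finally show "3 * t \<le> real k * \<mu>" .
qed

lemma abs_inner_d_le_mu:
  assumes "i \<noteq> j"
  shows "\<bar>inner (d i) (d j)\<bar> \<le> \<mu>"
  using abs_inner_columns_le_mu0[OF assms] mu_ge_mu0 by (rule order_trans)

lemma t_le_one_sixth: "t \<le> 1/6"
  using three_t_le_k_mu coh by simp

lemma abs_sin_le_t: "\<bar>sin (v$j * t)\<bar> \<le> t"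
proof -
  have "\<bar>sin (v$j * t)\<bar> \<le> \<bar>v$j\<bar> * t"
    using abs_sin_x_le_abs_x[of "v$j * t"] t_nonneg by (simp add: abs_mult)
  also have "\<dots> \<le> t" using abs_v_le_1 t_nonneg by (simp add: mult_left_le_one_le)
  finally show ?thesis .
qed

text \<open>The coherence of \<open>D(t)\<close> is at most \<open>\<mu>\<^sub>0 + 3 t\<close>: one term is bounded by \<open>\<mu>\<^sub>0\<close>, the three
  terms involving \<open>W\<close> carry a factor \<open>sin\<close>, of size at most \<open>t\<close>.\<close>
lemma abs_inner_dt_le_mu:
  assumes "i \<noteq> j"
  shows "\<bar>inner (d\<^sub>t i) (d\<^sub>t j)\<bar> \<le> \<mu>"
proof -
  have triple: "\<bar>x * y * z\<bar> \<le> p * q * r" if "\<bar>x\<bar> \<le> p" "\<bar>y\<bar> \<le> q" "\<bar>z\<bar> \<le> r" for x y z p q r :: real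
    unfolding abs_mult using that by (intro mult_mono) (auto intro: order_trans[OF abs_ge_zero])
  have unit: "\<bar>inner x y\<bar> \<le> 1" if "norm x = 1" "norm y = 1" for x y :: "real^'m"
    using Cauchy_Schwarz_ineq2[of x y] that by simp
  have "inner (d\<^sub>t i) (d\<^sub>t j) = cos (v$i * t) * cos (v$j * t) * inner (d i) (d j)
      + cos (v$i * t) * sin (v$j * t) * inner (d i) (w j)
      + sin (v$i * t) * cos (v$j * t) * inner (w i) (d j)
      + sin (v$i * t) * sin (v$j * t) * inner (w i) (w j)"
    unfolding column_Dt by (simp add: inner_add_left inner_add_right algebra_simps)
  moreover have "\<bar>cos (v$i * t) * cos (v$j * t) * inner (d i) (d j)\<bar> \<le> 1 * 1 * mu0 D0"
    using abs_inner_columns_le_mu0[OF assms] by (intro triple) auto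
  moreover have "\<bar>cos (v$i * t) * sin (v$j * t) * inner (d i) (w j)\<bar> \<le> 1 * t * 1"
    using abs_sin_le_t unit unit_cols W_unit by (intro triple) auto
  moreover have "\<bar>sin (v$i * t) * cos (v$j * t) * inner (w i) (d j)\<bar> \<le> t * 1 * 1"
    using abs_sin_le_t unit unit_cols W_unit by (intro triple) auto
  moreover have "\<bar>sin (v$i * t) * sin (v$j * t) * inner (w i) (w j)\<bar> \<le> t * 1 * 1"
    using abs_sin_le_t unit W_unit t_le_one_sixth
    by (intro triple) (auto intro: order_trans[OF abs_sin_le_t])
  ultimately show ?thesis by (simp add: mu_def)
qed

lemma inj_dt: "inj d\<^sub>t"
proof (rule injI, rule ccontr)
  fix i j assume "d\<^sub>t i = d\<^sub>t j" "i \<noteq> j"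
  hence "1 \<le> \<mu>" using abs_inner_dt_le_mu[of i j] inner_dt_dt[of j] by simp
  moreover have "\<mu> \<le> real k * \<mu>" using k_pos mu_nonneg by (simp add: mult_le_cancel_right1)
  ultimately show False using coh by simp
qed

lemma Qt_square: "(Qt D0 k t)\<^sup>2 = 1 / (1 - real k * \<mu>)"
  using coh by (simp add: Qt_def power_divide)

lemma Theta_bounds:
  fixes D :: "real^'p^'m"
  assumes unit: "\<And>j. inner (column j D) (column j D) = 1"
    and coherent: "\<And>i j. i \<noteq> j \<Longrightarrow> \<bar>inner (column i D) (column j D)\<bar> \<le> \<mu>"
    and S: "card S = k"
  shows "is_inverse_on S (gram D) (Theta D S)"
    and "j \<in> S \<Longrightarrow> \<bar>Theta D S j j\<bar> \<le> (Qt D0 k t)\<^sup>2"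
    and "i \<in> S \<Longrightarrow> j \<in> S \<Longrightarrow> i \<noteq> j \<Longrightarrow> \<bar>Theta D S i j\<bar> \<le> \<mu> * (Qt D0 k t)\<^sup>2"
proof -
  have le: "1 - real k * \<mu> \<le> 1 - (real (card S) - 1) * \<mu>"
    using mu_nonneg S by (simp add: algebra_simps)
  have pos: "0 < 1 - real k * \<mu>" using coh by simp
  have \<rho>: "1 / (1 - (real (card S) - 1) * \<mu>) \<le> (Qt D0 k t)\<^sup>2"
    unfolding Qt_square using pos le by (intro divide_left_mono) auto
  have "(real (card S) - 1) * \<mu> < 1" using pos le by linarith
  then interpret unit_diag_dominant S "gram D" \<mu>
    using unit coherent mu_nonneg by unfold_locales (auto simp: gram_def)
  show "is_inverse_on S (gram D) (Theta D S)"
    unfolding Theta_def by (rule is_inverse_on_inv_on)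
  show "j \<in> S \<Longrightarrow> \<bar>Theta D S j j\<bar> \<le> (Qt D0 k t)\<^sup>2"
    unfolding Theta_def using abs_inv_on_diag_le \<rho> by (blast intro: order_trans)
  show "\<bar>Theta D S i j\<bar> \<le> \<mu> * (Qt D0 k t)\<^sup>2" if "i \<in> S" "j \<in> S" "i \<noteq> j"
  proof -
    have "\<bar>Theta D S i j\<bar> \<le> \<mu> * (1 / (1 - (real (card S) - 1) * \<mu>))"
      unfolding Theta_def using abs_inv_on_off_diag_le[OF that] by simp
    also have "\<dots> \<le> \<mu> * (Qt D0 k t)\<^sup>2" using \<rho> mu_nonneg by (rule mult_left_mono)
    finally show ?thesis .
  qed
qed

lemma Theta_D0_bounds:
  assumes "card S = k"
  shows "is_inverse_on S (gram D0) (Theta D0 S)"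
    and "j \<in> S \<Longrightarrow> \<bar>Theta D0 S j j\<bar> \<le> (Qt D0 k t)\<^sup>2"
    and "i \<in> S \<Longrightarrow> j \<in> S \<Longrightarrow> i \<noteq> j \<Longrightarrow> \<bar>Theta D0 S i j\<bar> \<le> \<mu> * (Qt D0 k t)\<^sup>2"
  using Theta_bounds[OF inner_d_d abs_inner_d_le_mu assms] by auto

lemma Theta_Dt_bounds:
  assumes "card S = k"
  shows "is_inverse_on S (gram D\<^sub>t) (Theta D\<^sub>t S)"
    and "j \<in> S \<Longrightarrow> \<bar>Theta D\<^sub>t S j j\<bar> \<le> (Qt D0 k t)\<^sup>2"
    and "i \<in> S \<Longrightarrow> j \<in> S \<Longrightarrow> i \<noteq> j \<Longrightarrow> \<bar>Theta D\<^sub>t S i j\<bar> \<le> \<mu> * (Qt D0 k t)\<^sup>2"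
  using Theta_bounds[OF inner_dt_dt abs_inner_dt_le_mu assms] by auto

lemma specnorm_ge_1: "1 \<le> a"
  using norm_column_le_specnorm[of _ D0] unit_cols by metis

lemma norm_inner_e_le: "norm (\<chi> l. inner (e l) u) \<le> t * norm u"
proof -
  have "(norm (\<chi> l. inner (e l) u))\<^sup>2 = (\<Sum>l\<in>UNIV. (inner (e l) u)\<^sup>2)" by (simp add: power2_norm_vec)
  also have "\<dots> \<le> (\<Sum>l\<in>UNIV. inner (e l) (e l) * inner u u)"
    by (rule sum_mono) (rule Cauchy_Schwarz_ineq)
  also have "\<dots> = pert_sq * (norm u)\<^sup>2"
    by (simp add: pert_sq_def sum_distrib_right power2_norm_eq_inner)
  also have "\<dots> \<le> (t * norm u)\<^sup>2"
    using pert_sq_le by (simp add: mult_right_mono power_mult_distrib)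
  finally show ?thesis using t_nonneg by (simp add: power2_le_iff_abs_le)
qed

lemma sum_square_inner_dt_le: "(\<Sum>l\<in>UNIV. (inner (d\<^sub>t l) u)\<^sup>2) \<le> (a + t)\<^sup>2 * inner u u"
proof -
  have "(\<chi> l. inner (d\<^sub>t l) u) = (\<chi> l. inner (d l) u) + (\<chi> l. inner (e l) u)"
    by (simp add: vec_eq_iff inner_diff_left)
  hence "norm (\<chi> l. inner (d\<^sub>t l) u) \<le> (a + t) * norm u"
    using norm_triangle_ineq[of "\<chi> l. inner (d l) u" "\<chi> l. inner (e l) u"]
      norm_columns_inner_le_specnorm[of D0 u] norm_inner_e_le[of u]
    by (simp add: algebra_simps)
  hence "(norm (\<chi> l. inner (d\<^sub>t l) u))\<^sup>2 \<le> ((a + t) * norm u)\<^sup>2" by (simp add: power_mono)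
  also have "\<dots> = (a + t)\<^sup>2 * inner u u" by (simp add: power_mult_distrib power2_norm_eq_inner)
  finally show ?thesis by (simp add: power2_norm_vec)
qed

lemma sum_norm_e_le: "(\<Sum>j\<in>UNIV. norm (e j)) \<le> sqrt (real CARD('p)) * t"
proof -
  have "(\<Sum>j\<in>UNIV. norm (e j)) \<le> sqrt (real CARD('p)) * sqrt (\<Sum>j\<in>UNIV. (norm (e j))\<^sup>2)"
    using sum_abs_le_sqrt_card_mult_sqrt_sum_squares[of "\<lambda>j. norm (e j)" UNIV] by simp
  also have "sqrt (\<Sum>j\<in>UNIV. (norm (e j))\<^sup>2) \<le> t"
    using pert_sq_le t_nonneg by (simp add: pert_sq_def power2_norm_eq_inner real_sqrt_le_iff real_le_lsqrt)
  finally show ?thesis by (simp add: mult_left_mono)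
qed

lemma sum_abs_inner_d_e_le: "(\<Sum>j\<in>UNIV. \<Sum>l\<in>UNIV. \<bar>inner (d l) (e j)\<bar>) \<le> real CARD('p) * a * t"
proof -
  have "(\<Sum>l\<in>UNIV. \<bar>inner (d l) u\<bar>) \<le> sqrt (real CARD('p)) * (a * norm u)" for u
  proof -
    have "(\<Sum>l\<in>UNIV. \<bar>inner (d l) u\<bar>) \<le> sqrt (real CARD('p)) * norm (\<chi> l. inner (d l) u)"
      using sum_abs_le_sqrt_card_mult_sqrt_sum_squares[of "\<lambda>l. inner (d l) u" UNIV]
      by (simp add: norm_eq_sqrt_inner inner_vec_def power2_eq_square)
    also have "\<dots> \<le> sqrt (real CARD('p)) * (a * norm u)"
      by (rule mult_left_mono[OF norm_columns_inner_le_specnorm]) simp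
    finally show ?thesis .
  qed
  hence "(\<Sum>j\<in>UNIV. \<Sum>l\<in>UNIV. \<bar>inner (d l) (e j)\<bar>) \<le> (\<Sum>j\<in>UNIV. sqrt (real CARD('p)) * (a * norm (e j)))"
    by (intro sum_mono)
  also have "\<dots> = sqrt (real CARD('p)) * a * (\<Sum>j\<in>UNIV. norm (e j))"
    by (simp add: sum_distrib_left mult_ac)
  also have "\<dots> \<le> sqrt (real CARD('p)) * a * (sqrt (real CARD('p)) * t)"
    using sum_norm_e_le specnorm_ge_1 by (intro mult_left_mono) auto
  finally show ?thesis by (simp add: mult_ac)
qed

lemma sum_abs_inner_e_e_le: "(\<Sum>j\<in>UNIV. \<Sum>l\<in>UNIV. \<bar>inner (e l) (e j)\<bar>) \<le> real CARD('p) * t\<^sup>2"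
proof -
  have "(\<Sum>j\<in>UNIV. \<Sum>l\<in>UNIV. \<bar>inner (e l) (e j)\<bar>) \<le> (\<Sum>j\<in>UNIV. \<Sum>l\<in>UNIV. norm (e l) * norm (e j))"
    by (intro sum_mono) (rule Cauchy_Schwarz_ineq2)
  also have "\<dots> = (\<Sum>j\<in>UNIV. norm (e j))\<^sup>2" by (simp add: power2_eq_square sum_product mult_ac)
  also have "\<dots> \<le> (sqrt (real CARD('p)) * t)\<^sup>2"
    using sum_norm_e_le by (intro power_mono) (auto intro: sum_nonneg)
  finally show ?thesis by (simp add: power_mult_distrib)
qed

lemma sum_abs_inner_dt_e_le: "(\<Sum>i\<in>UNIV. \<Sum>l\<in>UNIV. \<bar>inner (d\<^sub>t l) (e i)\<bar>) \<le> real CARD('p) * t * (a + t)"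
proof -
  have "(\<Sum>i\<in>UNIV. \<Sum>l\<in>UNIV. \<bar>inner (d\<^sub>t l) (e i)\<bar>)
      \<le> (\<Sum>i\<in>UNIV. \<Sum>l\<in>UNIV. \<bar>inner (d l) (e i)\<bar> + \<bar>inner (e l) (e i)\<bar>)"
    by (intro sum_mono) (simp add: inner_diff_left abs_triangle_ineq4 flip: diff_add_cancel)
  also have "\<dots> = (\<Sum>i\<in>UNIV. \<Sum>l\<in>UNIV. \<bar>inner (d l) (e i)\<bar>) + (\<Sum>i\<in>UNIV. \<Sum>l\<in>UNIV. \<bar>inner (e l) (e i)\<bar>)"
    by (simp add: sum.distrib)
  finally show ?thesis
    using sum_abs_inner_d_e_le sum_abs_inner_e_e_le by (simp add: algebra_simps power2_eq_square)
qed

lemma sum_abs_gram_diff_le: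
  "(\<Sum>j\<in>UNIV. \<Sum>l\<in>UNIV. \<bar>gram D\<^sub>t j l - gram D0 j l\<bar>) \<le> real CARD('p) * t * (2 * a + t)"
proof -
  have "gram D\<^sub>t j l - gram D0 j l = inner (d l) (e j) + inner (d j) (e l) + inner (e l) (e j)" for j l
    by (simp add: gram_def inner_diff_left inner_diff_right inner_commute algebra_simps)
  hence "(\<Sum>j\<in>UNIV. \<Sum>l\<in>UNIV. \<bar>gram D\<^sub>t j l - gram D0 j l\<bar>)
      \<le> (\<Sum>j\<in>UNIV. \<Sum>l\<in>UNIV. \<bar>inner (d l) (e j)\<bar> + \<bar>inner (d j) (e l)\<bar> + \<bar>inner (e l) (e j)\<bar>)"
    by (intro sum_mono) (smt (verit))
  also have "\<dots> = (\<Sum>j\<in>UNIV. \<Sum>l\<in>UNIV. \<bar>inner (d l) (e j)\<bar>) + (\<Sum>j\<in>UNIV. \<Sum>l\<in>UNIV. \<bar>inner (d j) (e l)\<bar>)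
      + (\<Sum>j\<in>UNIV. \<Sum>l\<in>UNIV. \<bar>inner (e l) (e j)\<bar>)"
    by (simp add: sum.distrib)
  also have "(\<Sum>j\<in>UNIV. \<Sum>l\<in>UNIV. \<bar>inner (d j) (e l)\<bar>) = (\<Sum>j\<in>UNIV. \<Sum>l\<in>UNIV. \<bar>inner (d l) (e j)\<bar>)"
    by (rule sum.swap)
  finally show ?thesis
    using sum_abs_inner_d_e_le sum_abs_inner_e_e_le by (simp add: algebra_simps power2_eq_square)
qed

abbreviation "\<sigma> \<equiv> sqrt (1 - rip D0 k) - t"

lemma sigma_pos: "0 < \<sigma>" and sigma_le_1: "\<sigma> \<le> 1"
proof -
  have "(real k - 1) * mu0 D0 \<le> real k * \<mu>"
    using mu_ge_mu0 mu0_nonneg k_pos by (intro mult_mono) auto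
  hence "(1/6::real)\<^sup>2 < 1 - rip D0 k"
    using rip_le_coherence[OF unit_cols k_pos k_le_card] coh by (simp add: power2_eq_square)
  hence "1/6 < sqrt (1 - rip D0 k)" by (rule real_less_rsqrt)
  thus "0 < \<sigma>" using t_le_one_sixth by simp
  have "sqrt (1 - rip D0 k) \<le> 1" using rip_nonneg[OF unit_cols k_pos k_le_card] by simp
  thus "\<sigma> \<le> 1" using t_nonneg by linarith
qed

lemma Ct_ge_1: "1 \<le> Ct D0 k t"
  unfolding Ct_def using sigma_pos sigma_le_1 by simp

lemma lower_frame_bound_Dt:
  assumes S: "card S = k"
  shows "\<sigma> * sqrt (\<Sum>l\<in>S. (z l)\<^sup>2) \<le> norm (\<Sum>l\<in>S. z l *\<^sub>R d\<^sub>t l)"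
proof -
  let ?Z = "sqrt (\<Sum>l\<in>S. (z l)\<^sup>2)"
  have "sqrt ((1 - rip D0 k) * (\<Sum>l\<in>S. (z l)\<^sup>2)) \<le> sqrt ((norm (\<Sum>l\<in>S. z l *\<^sub>R d l))\<^sup>2)"
    by (rule real_sqrt_le_mono[OF rip_lower_bound[OF unit_cols k_pos k_le_card S]])
  hence d: "sqrt (1 - rip D0 k) * ?Z \<le> norm (\<Sum>l\<in>S. z l *\<^sub>R d l)" by (simp add: real_sqrt_mult)
  have "norm (\<Sum>l\<in>S. z l *\<^sub>R e l) \<le> (\<Sum>l\<in>S. \<bar>z l\<bar> * norm (e l))"
    by (rule order_trans[OF norm_sum]) simp
  also have "\<dots> \<le> ?Z * sqrt (\<Sum>l\<in>S. (norm (e l))\<^sup>2)"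
  proof -
    have "(\<Sum>l\<in>S. \<bar>z l\<bar> * norm (e l))\<^sup>2 \<le> (\<Sum>l\<in>S. \<bar>z l\<bar>\<^sup>2) * (\<Sum>l\<in>S. (norm (e l))\<^sup>2)"
      by (rule Cauchy_Schwarz_ineq_sum)
    hence "sqrt ((\<Sum>l\<in>S. \<bar>z l\<bar> * norm (e l))\<^sup>2) \<le> sqrt ((\<Sum>l\<in>S. (z l)\<^sup>2) * (\<Sum>l\<in>S. (norm (e l))\<^sup>2))"
      by (intro real_sqrt_le_mono) simp
    thus ?thesis by (simp add: real_sqrt_mult sum_nonneg)
  qed
  also have "\<dots> \<le> ?Z * t"
  proof (rule mult_left_mono)
    have "(\<Sum>l\<in>S. (norm (e l))\<^sup>2) \<le> pert_sq"
      unfolding pert_sq_def power2_norm_eq_inner by (rule sum_mono2) auto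
    thus "sqrt (\<Sum>l\<in>S. (norm (e l))\<^sup>2) \<le> t"
      using pert_sq_le t_nonneg by (simp add: real_sqrt_le_iff real_le_lsqrt)
  qed (simp add: sum_nonneg)
  finally have "norm (\<Sum>l\<in>S. z l *\<^sub>R e l) \<le> ?Z * t" .
  moreover have "(\<Sum>l\<in>S. z l *\<^sub>R d\<^sub>t l) = (\<Sum>l\<in>S. z l *\<^sub>R d l) + (\<Sum>l\<in>S. z l *\<^sub>R e l)"
    by (simp add: sum.distrib[symmetric] scaleR_diff_right)
  hence "norm (\<Sum>l\<in>S. z l *\<^sub>R d l) - norm (\<Sum>l\<in>S. z l *\<^sub>R e l) \<le> norm (\<Sum>l\<in>S. z l *\<^sub>R d\<^sub>t l)"
    by (simp only: norm_diff_ineq)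
  ultimately show ?thesis using d by (simp add: algebra_simps)
qed

lemma norm_projJ_le:
  assumes "card S = k"
  shows "(norm (projJ D\<^sub>t S u))\<^sup>2 \<le> (Ct D0 k t)\<^sup>2 * (\<Sum>l\<in>S. (inner (d\<^sub>t l) u)\<^sup>2)"
proof -
  have "(norm (projJ D\<^sub>t S u))\<^sup>2 \<le> (\<Sum>l\<in>S. (inner (d\<^sub>t l) u)\<^sup>2) / \<sigma>\<^sup>2"
    unfolding projJ_def using inj_dt sigma_pos lower_frame_bound_Dt[OF assms]
    by (intro norm_orth_proj_span_le_lower_frame_bound) (auto intro: inj_on_subset)
  thus ?thesis by (simp add: Ct_def power_divide)
qed

lemma residual_projJ_eq:
  assumes "j \<in> S"
  shows "inner (d j) (d j - projJ D\<^sub>t S (d j)) = inner (e j) (e j) - (norm (projJ D\<^sub>t S (e j)))\<^sup>2"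
proof -
  let ?V = "span (d\<^sub>t ` S)" and ?P = "projJ D\<^sub>t S"
  have dt: "d\<^sub>t j \<in> ?V" using assms by (intro span_base) auto
  have "?P (d j) = d\<^sub>t j - ?P (e j)"
    using orth_proj_span_diff_span[OF dt, of "e j"] by (simp add: projJ_def)
  hence r: "d j - ?P (d j) = - (e j - ?P (e j))" by simp
  have "inner (d j) (d j - ?P (d j)) = inner (e j - d\<^sub>t j) (e j - ?P (e j))"
    unfolding r by (simp add: inner_diff_right)
  also have "\<dots> = inner (e j) (e j - ?P (e j)) - inner (d\<^sub>t j) (e j - ?P (e j))"
    by (rule inner_diff_left)
  also have "inner (d\<^sub>t j) (e j - ?P (e j)) = 0"
    using orth_proj_span_orthogonal[OF dt, of "e j"] by (simp add: projJ_def inner_commute)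
  finally show ?thesis
    by (simp add: projJ_def inner_orth_proj_span_residual power2_norm_eq_inner)
qed

lemma inner_dt_e_square_le: "(inner (d\<^sub>t j) (e j))\<^sup>2 \<le> t\<^sup>2 / 4 * inner (e j) (e j)"
  using mult_right_mono[OF inner_e_e_le_t_square[of j], of "inner (e j) (e j)"]
  by (simp add: inner_dt_e power2_eq_square)

abbreviation "Q\<^sub>2 \<equiv> (Qt D0 k t)\<^sup>2"

lemma abs_Theta_product_le:
  assumes S: "card S = k" and j: "j \<in> S" and l: "l \<in> S" and jl: "j \<noteq> l"
  shows "\<bar>\<Sum>i\<in>S. Theta D0 S j i * Theta D\<^sub>t S l i\<bar> \<le> 5/2 * \<mu> * Q\<^sub>2\<^sup>2"
proof -
  let ?f = "\<lambda>i. Theta D0 S j i * Theta D\<^sub>t S l i"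
  have "(\<Sum>i\<in>S. ?f i) = ?f j + ?f l + (\<Sum>i\<in>S-{j}-{l}. ?f i)"
    using j l jl by (simp add: sum.remove[of S j] sum.remove[of "S-{j}" l])
  moreover have "\<bar>?f j\<bar> \<le> Q\<^sub>2 * (\<mu> * Q\<^sub>2)"
    unfolding abs_mult using Theta_D0_bounds(2)[OF S j] Theta_Dt_bounds(3)[OF S l j] jl
    by (intro mult_mono) auto
  moreover have "\<bar>?f l\<bar> \<le> (\<mu> * Q\<^sub>2) * Q\<^sub>2"
    unfolding abs_mult using Theta_D0_bounds(3)[OF S j l jl] Theta_Dt_bounds(2)[OF S l]
    by (intro mult_mono) auto
  moreover have "\<bar>\<Sum>i\<in>S-{j}-{l}. ?f i\<bar> \<le> real k * ((\<mu> * Q\<^sub>2) * (\<mu> * Q\<^sub>2))"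
  proof -
    have "\<bar>\<Sum>i\<in>S-{j}-{l}. ?f i\<bar> \<le> (\<Sum>i\<in>S-{j}-{l}. (\<mu> * Q\<^sub>2) * (\<mu> * Q\<^sub>2))"
    proof (rule order_trans[OF sum_abs sum_mono])
      fix i assume "i \<in> S-{j}-{l}"
      thus "\<bar>?f i\<bar> \<le> (\<mu> * Q\<^sub>2) * (\<mu> * Q\<^sub>2)"
        unfolding abs_mult using Theta_D0_bounds(3)[OF S j] Theta_Dt_bounds(3)[OF S l] mu_nonneg
        by (intro mult_mono) auto
    qed
    also have "\<dots> \<le> real k * ((\<mu> * Q\<^sub>2) * (\<mu> * Q\<^sub>2))"
    proof -
      have "card (S-{j}-{l}) \<le> card S" by (rule card_mono) auto
      thus ?thesis using S by (simp add: mult_right_mono)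
    qed
    finally show ?thesis .
  qed
  ultimately have "\<bar>\<Sum>i\<in>S. ?f i\<bar> \<le> \<mu> * Q\<^sub>2\<^sup>2 * (2 + real k * \<mu>)"
    by (simp add: power2_eq_square algebra_simps)
  also have "\<dots> \<le> \<mu> * Q\<^sub>2\<^sup>2 * (5/2)" using coh mu_nonneg by (intro mult_left_mono) auto
  finally show ?thesis by (simp add: mult_ac)
qed

lemma abs_trace_Theta_diff_le:
  assumes S: "card S = k"
  shows "\<bar>\<Sum>j\<in>S. Theta D0 S j j - Theta D\<^sub>t S j j\<bar>
       \<le> (\<Sum>j\<in>S. \<Sum>l\<in>S-{j}. 5/2 * \<mu> * Q\<^sub>2\<^sup>2 * \<bar>gram D\<^sub>t j l - gram D0 j l\<bar>)"
proof -
  let ?\<Delta> = "\<lambda>j l. gram D\<^sub>t j l - gram D0 j l"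
  have "(\<Sum>j\<in>S. Theta D0 S j j - Theta D\<^sub>t S j j)
      = (\<Sum>j\<in>S. \<Sum>l\<in>S. ?\<Delta> j l * (\<Sum>i\<in>S. Theta D0 S j i * Theta D\<^sub>t S l i))"
    using Theta_D0_bounds(1)[OF S] Theta_Dt_bounds(1)[OF S]
    by (rule trace_inverse_diff) (simp add: gram_def inner_commute)
  also have "\<dots> = (\<Sum>j\<in>S. \<Sum>l\<in>S-{j}. ?\<Delta> j l * (\<Sum>i\<in>S. Theta D0 S j i * Theta D\<^sub>t S l i))"
  proof (rule sum.cong[OF refl])
    fix j assume "j \<in> S"
    thus "(\<Sum>l\<in>S. ?\<Delta> j l * (\<Sum>i\<in>S. Theta D0 S j i * Theta D\<^sub>t S l i))
        = (\<Sum>l\<in>S-{j}. ?\<Delta> j l * (\<Sum>i\<in>S. Theta D0 S j i * Theta D\<^sub>t S l i))"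
      using sum.remove[of S j "\<lambda>l. ?\<Delta> j l * (\<Sum>i\<in>S. Theta D0 S j i * Theta D\<^sub>t S l i)"]
      by (simp add: gram_def inner_dt_dt inner_d_d)
  qed
  finally have "\<bar>\<Sum>j\<in>S. Theta D0 S j j - Theta D\<^sub>t S j j\<bar>
      \<le> (\<Sum>j\<in>S. \<Sum>l\<in>S-{j}. \<bar>?\<Delta> j l * (\<Sum>i\<in>S. Theta D0 S j i * Theta D\<^sub>t S l i)\<bar>)"
    by (simp only: order_trans[OF sum_abs sum_mono[OF sum_abs]])
  also have "\<dots> \<le> (\<Sum>j\<in>S. \<Sum>l\<in>S-{j}. 5/2 * \<mu> * Q\<^sub>2\<^sup>2 * \<bar>?\<Delta> j l\<bar>)"
  proof (intro sum_mono)
    fix j l assume "j \<in> S" "l \<in> S - {j}"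
    hence "\<bar>\<Sum>i\<in>S. Theta D0 S j i * Theta D\<^sub>t S l i\<bar> \<le> 5/2 * \<mu> * Q\<^sub>2\<^sup>2"
      using abs_Theta_product_le[OF S] by auto
    thus "\<bar>?\<Delta> j l * (\<Sum>i\<in>S. Theta D0 S j i * Theta D\<^sub>t S l i)\<bar> \<le> 5/2 * \<mu> * Q\<^sub>2\<^sup>2 * \<bar>?\<Delta> j l\<bar>"
      unfolding abs_mult mult.commute[of _ "\<bar>?\<Delta> j l\<bar>"] by (rule mult_left_mono) simp_all
  qed
  finally show ?thesis .
qed

lemma trace_projection_diff_eq:
  assumes S: "card S = k"
  shows "(\<Sum>i\<in>S. (\<Sum>l\<in>S. Theta D0 S i l * inner (d l) (d i))
                 - (\<Sum>l\<in>S. Theta D\<^sub>t S i l * inner (d\<^sub>t l) (d i)))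
       = (\<Sum>i\<in>S. \<Sum>l\<in>S. Theta D\<^sub>t S i l * inner (d\<^sub>t l) (e i))"
proof -
  have "(\<Sum>i\<in>S. \<Sum>l\<in>S. Theta D0 S i l * inner (d l) (d i)) = real (card S)"
    using trace_inverse_mult[OF Theta_D0_bounds(1)[OF S]] unfolding gram_def .
  moreover have "(\<Sum>i\<in>S. \<Sum>l\<in>S. Theta D\<^sub>t S i l * inner (d\<^sub>t l) (d\<^sub>t i)) = real (card S)"
    using trace_inverse_mult[OF Theta_Dt_bounds(1)[OF S]] unfolding gram_def .
  ultimately show ?thesis
    by (simp add: inner_diff_right right_diff_distrib sum_subtractf)
qed

lemma abs_trace_Theta_Dt_inner_e_le:
  assumes S: "card S = k"
  shows "\<bar>\<Sum>i\<in>S. \<Sum>l\<in>S. Theta D\<^sub>t S i l * inner (d\<^sub>t l) (e i)\<bar>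
       \<le> Q\<^sub>2 * (\<Sum>i\<in>S. inner (d\<^sub>t i) (e i)) + \<mu> * Q\<^sub>2 * (\<Sum>i\<in>S. \<Sum>l\<in>S-{i}. \<bar>inner (d\<^sub>t l) (e i)\<bar>)"
proof -
  let ?F = "\<lambda>l i. inner (d\<^sub>t l) (e i)"
  have "\<bar>\<Sum>l\<in>S. Theta D\<^sub>t S i l * ?F l i\<bar> \<le> Q\<^sub>2 * ?F i i + \<mu> * Q\<^sub>2 * (\<Sum>l\<in>S-{i}. \<bar>?F l i\<bar>)"
    if i: "i \<in> S" for i
  proof -
    have "\<bar>\<Sum>l\<in>S. Theta D\<^sub>t S i l * ?F l i\<bar>
        \<le> \<bar>Theta D\<^sub>t S i i * ?F i i\<bar> + (\<Sum>l\<in>S-{i}. \<bar>Theta D\<^sub>t S i l * ?F l i\<bar>)"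
      unfolding sum.remove[OF finite i] by (rule order_trans[OF abs_triangle_ineq add_left_mono[OF sum_abs]])
    also have "\<bar>Theta D\<^sub>t S i i * ?F i i\<bar> \<le> Q\<^sub>2 * ?F i i"
      unfolding abs_mult using Theta_Dt_bounds(2)[OF S i]
      by (simp add: inner_dt_e mult_right_mono)
    also have "(\<Sum>l\<in>S-{i}. \<bar>Theta D\<^sub>t S i l * ?F l i\<bar>) \<le> (\<Sum>l\<in>S-{i}. \<mu> * Q\<^sub>2 * \<bar>?F l i\<bar>)"
      unfolding abs_mult using Theta_Dt_bounds(3)[OF S i]
      by (intro sum_mono) (auto intro: mult_right_mono)
    finally show ?thesis by (simp add: sum_distrib_left)
  qed
  hence "\<bar>\<Sum>i\<in>S. \<Sum>l\<in>S. Theta D\<^sub>t S i l * ?F l i\<bar>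
      \<le> (\<Sum>i\<in>S. Q\<^sub>2 * ?F i i + \<mu> * Q\<^sub>2 * (\<Sum>l\<in>S-{i}. \<bar>?F l i\<bar>))"
    by (rule order_trans[OF sum_abs sum_mono])
  thus ?thesis by (simp add: sum.distrib sum_distrib_left)
qed

lemma residual_sum_ge:
  assumes S: "card S = k"
  shows "(\<Sum>j\<in>S. inner (e j) (e j) - (Ct D0 k t)\<^sup>2 * (inner (d\<^sub>t j) (e j))\<^sup>2)
           - (Ct D0 k t)\<^sup>2 * (\<Sum>j\<in>S. \<Sum>l\<in>S-{j}. (inner (d\<^sub>t l) (e j))\<^sup>2)
       \<le> (\<Sum>j\<in>S. inner (d j) (d j - projJ D\<^sub>t S (d j)))"
proof -
  let ?C = "Ct D0 k t"
  have "(\<Sum>j\<in>S. inner (e j) (e j) - ?C\<^sup>2 * (inner (d\<^sub>t j) (e j))\<^sup>2)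
           - ?C\<^sup>2 * (\<Sum>j\<in>S. \<Sum>l\<in>S-{j}. (inner (d\<^sub>t l) (e j))\<^sup>2)
      = (\<Sum>j\<in>S. (inner (e j) (e j) - ?C\<^sup>2 * (inner (d\<^sub>t j) (e j))\<^sup>2)
           - ?C\<^sup>2 * (\<Sum>l\<in>S-{j}. (inner (d\<^sub>t l) (e j))\<^sup>2))"
    by (simp add: sum_subtractf sum_distrib_left)
  also have "\<dots> = (\<Sum>j\<in>S. inner (e j) (e j) - ?C\<^sup>2 * (\<Sum>l\<in>S. (inner (d\<^sub>t l) (e j))\<^sup>2))"
  proof (rule sum.cong[OF refl])
    fix j assume "j \<in> S"
    thus "(inner (e j) (e j) - ?C\<^sup>2 * (inner (d\<^sub>t j) (e j))\<^sup>2)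
           - ?C\<^sup>2 * (\<Sum>l\<in>S-{j}. (inner (d\<^sub>t l) (e j))\<^sup>2)
        = inner (e j) (e j) - ?C\<^sup>2 * (\<Sum>l\<in>S. (inner (d\<^sub>t l) (e j))\<^sup>2)"
      using sum.remove[of S j "\<lambda>l. (inner (d\<^sub>t l) (e j))\<^sup>2"] by (simp add: algebra_simps)
  qed
  also have "\<dots> \<le> (\<Sum>j\<in>S. inner (d j) (d j - projJ D\<^sub>t S (d j)))"
  proof (rule sum_mono)
    fix j assume "j \<in> S"
    thus "inner (e j) (e j) - ?C\<^sup>2 * (\<Sum>l\<in>S. (inner (d\<^sub>t l) (e j))\<^sup>2)
        \<le> inner (d j) (d j - projJ D\<^sub>t S (d j))"
      unfolding residual_projJ_eq[OF \<open>j \<in> S\<close>] using norm_projJ_le[OF S, of "e j"] by linarith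
  qed
  finally show ?thesis .
qed

end

section \<open>Averaging over the support\<close>

locale perturbed_random_support =
  perturbed_dictionary D0 W v t k + random_support J k
  for D0 W :: "real^'p^'m" and v :: "real^'p" and t :: real and k :: nat and J :: "'p set pmf"
begin

lemma expected_residual_ge:
  "(1 - (Ct D0 k t * (a * sqrt (real k / real CARD('p)) + t))\<^sup>2) * (real k / real CARD('p)) * t\<^sup>2
     \<le> measure_pmf.expectation J (\<lambda>S. \<Sum>j\<in>S. inner (d j) (d j - projJ D\<^sub>t S (d j)))"
proof -
  let ?x = "real k / real CARD('p)" and ?C = "Ct D0 k t"
  let ?X = "\<lambda>S. \<Sum>j\<in>S. inner (d j) (d j - projJ D\<^sub>t S (d j))"
  let ?B = "\<lambda>S. \<Sum>j\<in>S. \<Sum>l\<in>S-{j}. (inner (d\<^sub>t l) (e j))\<^sup>2"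
  define SF where "SF = (\<Sum>j\<in>UNIV. (inner (d\<^sub>t j) (e j))\<^sup>2)"
  define SG where "SG = (\<Sum>j\<in>UNIV. \<Sum>l\<in>UNIV-{j}. (inner (d\<^sub>t l) (e j))\<^sup>2)"
  have x0: "0 \<le> ?x" and x1: "?x \<le> 1" using k_le_card by simp_all
  have "measure_pmf.expectation J (\<lambda>S. \<Sum>j\<in>S. inner (e j) (e j) - ?C\<^sup>2 * (inner (d\<^sub>t j) (e j))\<^sup>2)
      = ?x * (pert_sq - ?C\<^sup>2 * SF)"
    unfolding expectation_sum pert_sq_def SF_def by (simp add: sum_subtractf sum_distrib_left)
  hence "measure_pmf.expectation J
          (\<lambda>S. (\<Sum>j\<in>S. inner (e j) (e j) - ?C\<^sup>2 * (inner (d\<^sub>t j) (e j))\<^sup>2) - ?C\<^sup>2 * ?B S)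
      = ?x * (pert_sq - ?C\<^sup>2 * SF) - ?C\<^sup>2 * measure_pmf.expectation J ?B"
    by (simp only: Bochner_Integration.integral_diff[OF integrable_pmf_finite_type integrable_pmf_finite_type]
        integral_mult_right_zero)
  also have "\<dots> \<ge> ?x * (pert_sq - ?C\<^sup>2 * SF) - ?C\<^sup>2 * (?x * ?x * SG)"
  proof -
    have "measure_pmf.expectation J ?B \<le> ?x * ?x * SG"
      unfolding SG_def by (rule expectation_pair_sum_le) simp
    hence "?C\<^sup>2 * measure_pmf.expectation J ?B \<le> ?C\<^sup>2 * (?x * ?x * SG)"
      by (rule mult_left_mono) simp
    thus ?thesis by linarith
  qed
  moreover have "measure_pmf.expectation J
          (\<lambda>S. (\<Sum>j\<in>S. inner (e j) (e j) - ?C\<^sup>2 * (inner (d\<^sub>t j) (e j))\<^sup>2) - ?C\<^sup>2 * ?B S)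
      \<le> measure_pmf.expectation J ?X"
    using residual_sum_ge card_support by (intro expectation_pmf_mono) auto
  ultimately have low: "?x * (pert_sq - ?C\<^sup>2 * SF) - ?C\<^sup>2 * (?x * ?x * SG) \<le> measure_pmf.expectation J ?X"
    by linarith
  have SF: "SF \<le> t\<^sup>2 / 4 * pert_sq"
    unfolding SF_def pert_sq_def sum_distrib_left by (rule sum_mono) (rule inner_dt_e_square_le)
  have "SG = (\<Sum>j\<in>UNIV. (\<Sum>l\<in>UNIV. (inner (d\<^sub>t l) (e j))\<^sup>2) - (inner (d\<^sub>t j) (e j))\<^sup>2)"
    unfolding SG_def by (intro sum.cong refl) (simp add: sum_diff1)
  also have "\<dots> \<le> (\<Sum>j\<in>UNIV. (a + t)\<^sup>2 * inner (e j) (e j) - (inner (d\<^sub>t j) (e j))\<^sup>2)"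
    by (intro sum_mono diff_right_mono sum_square_inner_dt_le)
  finally have SG: "SG \<le> (a + t)\<^sup>2 * pert_sq - SF"
    unfolding pert_sq_def SF_def by (simp add: sum_subtractf sum_distrib_left)
  define L where "L = ?C\<^sup>2 * ((1 - ?x) * t\<^sup>2 / 4 + ?x * (a + t)\<^sup>2)"
  have "?C\<^sup>2 * (?x * SF + ?x * ?x * SG) \<le> ?C\<^sup>2 * ((?x - ?x * ?x) * SF + ?x * ?x * (a + t)\<^sup>2 * pert_sq)"
    using mult_left_mono[OF SG, of "?x * ?x"] by (intro mult_left_mono) (auto simp: algebra_simps)
  also have "\<dots> \<le> ?C\<^sup>2 * ((?x - ?x * ?x) * (t\<^sup>2 / 4 * pert_sq) + ?x * ?x * (a + t)\<^sup>2 * pert_sq)"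
    using mult_left_mono[OF SF, of "?x - ?x * ?x"] mult_left_mono[OF x1 x0]
    by (intro mult_left_mono) auto
  also have "\<dots> = ?x * pert_sq * L"
    unfolding L_def by (simp add: algebra_simps, simp add: field_simps)
  finally have "?C\<^sup>2 * (?x * SF + ?x * ?x * SG) \<le> ?x * pert_sq * L" .
  moreover have "?x * (pert_sq - ?C\<^sup>2 * SF) - ?C\<^sup>2 * (?x * ?x * SG)
      = ?x * pert_sq - ?C\<^sup>2 * (?x * SF + ?x * ?x * SG)"
    by (simp add: algebra_simps)
  moreover have "?x * pert_sq * (1 - L) = ?x * pert_sq - ?x * pert_sq * L"
    by (simp only: right_diff_distrib mult_1_right)
  ultimately have "?x * pert_sq * (1 - L) \<le> measure_pmf.expectation J ?X"
    using low by linarith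
  moreover have "0 \<le> measure_pmf.expectation J ?X"
    unfolding projJ_def by (intro integral_nonneg_AE AE_I2 sum_nonneg inner_orth_proj_span_residual_nonneg)
  ultimately show ?thesis
    using residual_lower_bound_arith[OF x0 x1 specnorm_ge_1 Ct_ge_1 t_nonneg pert_sq_le pert_sq_ge]
    unfolding L_def by (simp add: mult_ac)
qed

lemma abs_expected_trace_projection_diff_le:
  "\<bar>measure_pmf.expectation J
      (\<lambda>S. \<Sum>i\<in>S. (\<Sum>l\<in>S. Theta D0 S i l * inner (d l) (d i))
                  - (\<Sum>l\<in>S. Theta D\<^sub>t S i l * inner (d\<^sub>t l) (d i)))\<bar>
     \<le> 3 * Q\<^sub>2 * t * (real k / real CARD('p)) * a * (real k * \<mu>)"
proof -
  let ?x = "real k / real CARD('p)" and ?F = "\<lambda>l i. inner (d\<^sub>t l) (e i)"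
  let ?P = "\<lambda>S. \<Sum>i\<in>S. \<Sum>l\<in>S-{i}. \<bar>?F l i\<bar>"
  have "\<bar>measure_pmf.expectation J
      (\<lambda>S. \<Sum>i\<in>S. (\<Sum>l\<in>S. Theta D0 S i l * inner (d l) (d i))
                  - (\<Sum>l\<in>S. Theta D\<^sub>t S i l * inner (d\<^sub>t l) (d i)))\<bar>
      \<le> measure_pmf.expectation J (\<lambda>S. Q\<^sub>2 * (\<Sum>i\<in>S. ?F i i) + \<mu> * Q\<^sub>2 * ?P S)"
    using trace_projection_diff_eq abs_trace_Theta_Dt_inner_e_le card_support
    by (intro abs_expectation_pmf_le) auto
  also have "\<dots> = Q\<^sub>2 * (?x * (pert_sq / 2)) + \<mu> * Q\<^sub>2 * measure_pmf.expectation J ?P"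
    by (simp add: expectation_sum inner_dt_e pert_sq_def sum_divide_distrib)
  also have "\<dots> \<le> Q\<^sub>2 * (?x * (t\<^sup>2 / 2)) + \<mu> * Q\<^sub>2 * (?x * ?x * (real CARD('p) * t * (a + t)))"
  proof (intro add_mono mult_left_mono)
    show "pert_sq / 2 \<le> t\<^sup>2 / 2" using pert_sq_le by simp
    have "(\<Sum>i\<in>UNIV. \<Sum>l\<in>UNIV-{i}. \<bar>?F l i\<bar>) \<le> real CARD('p) * t * (a + t)"
      by (rule order_trans[OF sum_mono[OF sum_mono2] sum_abs_inner_dt_e_le]) auto
    hence "?x * ?x * (\<Sum>i\<in>UNIV. \<Sum>l\<in>UNIV-{i}. \<bar>?F l i\<bar>) \<le> ?x * ?x * (real CARD('p) * t * (a + t))"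
      by (rule mult_left_mono) simp
    moreover have "measure_pmf.expectation J ?P \<le> ?x * ?x * (\<Sum>i\<in>UNIV. \<Sum>l\<in>UNIV-{i}. \<bar>?F l i\<bar>)"
      by (rule expectation_pair_sum_le) simp
    ultimately show "measure_pmf.expectation J ?P \<le> ?x * ?x * (real CARD('p) * t * (a + t))"
      by linarith
  qed (use mu_nonneg in simp_all)
  also have "\<dots> = Q\<^sub>2 * t * ?x * (t / 2 + real k * \<mu> * (a + t))"
    by (simp add: field_simps power2_eq_square)
  also have "\<dots> \<le> Q\<^sub>2 * t * ?x * (3 * a * (real k * \<mu>))"
  proof (rule mult_left_mono)
    have K: "0 \<le> real k * \<mu>" using mu_nonneg by simp
    have "real k * \<mu> * t \<le> real k * \<mu> * (1/6)" by (rule mult_left_mono[OF t_le_one_sixth K])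
    moreover have "real k * \<mu> * 1 \<le> real k * \<mu> * a" by (rule mult_left_mono[OF specnorm_ge_1 K])
    ultimately show "t / 2 + real k * \<mu> * (a + t) \<le> 3 * a * (real k * \<mu>)"
      using three_t_le_k_mu K by (simp add: algebra_simps)
  qed (use t_nonneg in simp)
  finally show ?thesis by (simp add: mult_ac)
qed

lemma abs_expected_trace_Theta_diff_le:
  "\<bar>measure_pmf.expectation J (\<lambda>S. \<Sum>j\<in>S. Theta D0 S j j - Theta D\<^sub>t S j j)\<bar>
     \<le> 8 * Q\<^sub>2\<^sup>2 * t * (real k / real CARD('p)) * a * (real k * \<mu>)"
proof -
  let ?x = "real k / real CARD('p)" and ?\<beta> = "5/2 * \<mu> * Q\<^sub>2\<^sup>2"
  let ?\<Delta> = "\<lambda>j l. \<bar>gram D\<^sub>t j l - gram D0 j l\<bar>"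
  have "\<bar>measure_pmf.expectation J (\<lambda>S. \<Sum>j\<in>S. Theta D0 S j j - Theta D\<^sub>t S j j)\<bar>
      \<le> measure_pmf.expectation J (\<lambda>S. \<Sum>j\<in>S. \<Sum>l\<in>S-{j}. ?\<beta> * ?\<Delta> j l)"
    using abs_trace_Theta_diff_le card_support by (intro abs_expectation_pmf_le) auto
  also have "\<dots> \<le> ?x * ?x * (\<Sum>j\<in>UNIV. \<Sum>l\<in>UNIV-{j}. ?\<beta> * ?\<Delta> j l)"
    using mu_nonneg by (intro expectation_pair_sum_le) simp
  also have "\<dots> \<le> ?x * ?x * (?\<beta> * (real CARD('p) * t * (2 * a + t)))"
  proof (intro mult_left_mono)
    have "(\<Sum>j\<in>UNIV. \<Sum>l\<in>UNIV-{j}. ?\<beta> * ?\<Delta> j l) = ?\<beta> * (\<Sum>j\<in>UNIV. \<Sum>l\<in>UNIV-{j}. ?\<Delta> j l)"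
      by (simp add: sum_distrib_left)
    also have "\<dots> \<le> ?\<beta> * (\<Sum>j\<in>UNIV. \<Sum>l\<in>UNIV. ?\<Delta> j l)"
      using mu_nonneg by (intro mult_left_mono sum_mono sum_mono2) auto
    also have "\<dots> \<le> ?\<beta> * (real CARD('p) * t * (2 * a + t))"
      using sum_abs_gram_diff_le mu_nonneg by (intro mult_left_mono) auto
    finally show "(\<Sum>j\<in>UNIV. \<Sum>l\<in>UNIV-{j}. ?\<beta> * ?\<Delta> j l) \<le> ?\<beta> * (real CARD('p) * t * (2 * a + t))" .
  qed simp
  also have "\<dots> = 5/2 * Q\<^sub>2\<^sup>2 * t * ?x * (2 * a + t) * (real k * \<mu>)"
    by (simp add: field_simps)
  also have "\<dots> \<le> 5/2 * Q\<^sub>2\<^sup>2 * t * ?x * (3 * a) * (real k * \<mu>)"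
    using specnorm_ge_1 t_le_one_sixth t_nonneg mu_nonneg
    by (intro mult_right_mono mult_left_mono) auto
  also have "\<dots> = 15/2 * (Q\<^sub>2\<^sup>2 * t * ?x * a * (real k * \<mu>))" by simp
  also have "\<dots> \<le> 8 * (Q\<^sub>2\<^sup>2 * t * ?x * a * (real k * \<mu>))"
    using specnorm_ge_1 t_nonneg mu_nonneg by (intro mult_right_mono) auto
  finally show ?thesis by (simp add: mult_ac)
qed

end

theorem lemma14:
  fixes D0 W :: "real^'p^'m" and v :: "real^'p" and t :: real and k :: nat
    and J :: "'p set pmf"
  assumes unit_cols: "\<forall>j. norm (column j D0) = 1"
    and supp_card: "\<forall>S\<in>set_pmf J. card S = k"
    and marg1: "\<forall>j. measure_pmf.prob J {S. j \<in> S} = real k / real CARD('p)"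
    and marg2: "\<forall>i j. i \<noteq> j \<longrightarrow> measure_pmf.prob J {S. i \<in> S \<and> j \<in> S}
                   = real k * (real k - 1) / (real CARD('p) * (real CARD('p) - 1))"
    and t_nonneg: "0 \<le> t"
    and coh: "real k * mu D0 t < 1 / 2"
    and W_orth: "\<forall>j. inner (column j W) (column j D0) = 0"
    and W_unit: "\<forall>j. norm (column j W) = 1"
    and v_unit: "norm v = 1"
  shows
    "(measure_pmf.expectation J
        (\<lambda>S. \<Sum>j\<in>S. inner (column j D0)
                (column j D0 - projJ (Dt D0 W v t) S (column j D0)))
      \<ge> (1 - (Ct D0 k t * (specnorm D0 * sqrt (real k / real CARD('p)) + t))\<^sup>2)
          * (real k / real CARD('p)) * t\<^sup>2)
  \<and>
    \<bar>measure_pmf.expectation J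
        (\<lambda>S. \<Sum>i\<in>S. (\<Sum>l\<in>S. Theta D0 S i l * inner (column l D0) (column i D0))
                    - (\<Sum>l\<in>S. Theta (Dt D0 W v t) S i l
                                  * inner (column l (Dt D0 W v t)) (column i D0)))\<bar>
      \<le> 3 * (Qt D0 k t)\<^sup>2 * t * (real k / real CARD('p)) * specnorm D0 * (real k * mu D0 t)
  \<and>
    \<bar>measure_pmf.expectation J
        (\<lambda>S. \<Sum>j\<in>S. Theta D0 S j j - Theta (Dt D0 W v t) S j j)\<bar>
      \<le> 8 * (Qt D0 k t) ^ 4 * t * (real k / real CARD('p)) * specnorm D0 * (real k * mu D0 t)"
proof (cases "k = 0")
  case True
  hence "S = {}" if "S \<in> set_pmf J" for S using supp_card that by simp
  hence "measure_pmf.expectation J f = 0" if "f {} = 0" for f :: "'p set \<Rightarrow> real"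
    using that by (intro integral_eq_zero_AE) (auto simp: AE_measure_pmf_iff)
  thus ?thesis using True by simp
next
  case False
  interpret random_support J k using supp_card marg1 marg2 by unfold_locales
  interpret perturbed_random_support D0 W v t k J
    using assms False k_le_card by unfold_locales auto
  show ?thesis
    using expected_residual_ge abs_expected_trace_projection_diff_le abs_expected_trace_Theta_diff_le
    by (simp add: power_mult[symmetric])
qed

end
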